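(* Let $(X,\mu)$ be a Lebesgue space with a continuous probability measure $\mu$, and let $\rho$ be an almost-metric on $X$. (1) There exists an everywhere finite semimetric $\tilde\rho$ on $X$ that is equivalent to $\rho$, i.e. $\tilde\rho(x,y)=\rho(x,y)$ for $(\mu\times\mu)$-almost all $(x,y)\in X\times X$. (2) If moreover $\rho$ is essentially separable, then $\tilde\rho$ in (1) can be chosen so that $(X,\tilde\rho)$ is a separable semimetric space; in particular $\tilde\rho$ can be chosen admissible.
   Context: An almost-metric on a Lebesgue probability space $(X,\mu)$ is a measurable non-negative function $\rho$ on $(X\times X,\mu\times\mu)$ such that $\rho(x,y)=\rho(y,x)$ and $\rho(x,z)\le\rho(x,y)+\rho(y,z)$ for almost all $x,y,z\in X$. The essential diameter of a set $A\subset X$ is the essential supremum of $\rho$ restricted to $A\times A$. The almost-metric $\rho$ is essentially separable if for every $\varepsilon>0$ the space $X$ can be covered by countably many measurable sets of essential diameter less than $\varepsilon$. A semimetric is a finite non-negative symmetric function satisfying the triangle inequality everywhere and vanishing on the diagonal (it may vanish off the diagonal). A (semi)metric on a Lebesgue space is admissible if its restriction to some set of full measure is a separable (semi)metric space. *)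

theory Defs
  imports "HOL-Probability.Probability"
begin

definition iso_mod0 :: "'a measure \<Rightarrow> 'b measure \<Rightarrow> bool" where
  "iso_mod0 M N \<longleftrightarrow> (\<exists>A B f.
      A \<in> sets M \<and> space M - A \<in> null_sets M \<and>
      B \<in> sets N \<and> space N - B \<in> null_sets N \<and>
      bij_betw f A B \<and>
      (\<forall>S. S \<subseteq> A \<longrightarrow> (S \<in> sets M \<longleftrightarrow> f ` S \<in> sets N)) \<and>
      (\<forall>S. S \<in> sets M \<longrightarrow> S \<subseteq> A \<longrightarrow> emeasure N (f ` S) = emeasure M S))"

text \<open>Lebesgue (standard) probability space: a complete probability space that is
  isomorphic mod 0 to the completion of a Borel probability measure on the real line
  (equivalently, on a standard Borel / Polish space).\<close>
definition lebesgue_space :: "'a measure \<Rightarrow> bool" where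
  "lebesgue_space M \<longleftrightarrow> prob_space M \<and> complete_measure M \<and>
     (\<exists>\<nu> :: real measure. prob_space \<nu> \<and> sets \<nu> = sets borel \<and> iso_mod0 M (completion \<nu>))"

definition continuous_measure :: "'a measure \<Rightarrow> bool" where
  "continuous_measure M \<longleftrightarrow> (\<forall>x\<in>space M. {x} \<in> null_sets M)"

definition almost_metric :: "'a measure \<Rightarrow> ('a \<Rightarrow> 'a \<Rightarrow> real) \<Rightarrow> bool" where
  "almost_metric M \<rho> \<longleftrightarrow>
     (\<lambda>(x, y). \<rho> x y) \<in> borel_measurable (completion (M \<Otimes>\<^sub>M M)) \<and>
     (\<forall>x\<in>space M. \<forall>y\<in>space M. 0 \<le> \<rho> x y) \<and>
     (AE p in M \<Otimes>\<^sub>M M. \<rho> (fst p) (snd p) = \<rho> (snd p) (fst p)) \<and>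
     (AE t in M \<Otimes>\<^sub>M (M \<Otimes>\<^sub>M M).
        \<rho> (fst t) (snd (snd t)) \<le> \<rho> (fst t) (fst (snd t)) + \<rho> (fst (snd t)) (snd (snd t)))"

text \<open>Essential diameter of A: essential supremum of \<rho> restricted to A\<times>A
  (value -\<infinity> outside A\<times>A, so that only A\<times>A matters).\<close>
definition ess_diam :: "'a measure \<Rightarrow> ('a \<Rightarrow> 'a \<Rightarrow> real) \<Rightarrow> 'a set \<Rightarrow> ereal" where
  "ess_diam M \<rho> A = esssup (completion (M \<Otimes>\<^sub>M M))
     (\<lambda>(x, y). if x \<in> A \<and> y \<in> A then ereal (\<rho> x y) else -\<infinity>)"

definition essentially_separable :: "'a measure \<Rightarrow> ('a \<Rightarrow> 'a \<Rightarrow> real) \<Rightarrow> bool" where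
  "essentially_separable M \<rho> \<longleftrightarrow> (\<forall>\<epsilon>>0. \<exists>\<A>. countable \<A> \<and> \<A> \<subseteq> sets M \<and>
     space M \<subseteq> \<Union>\<A> \<and> (\<forall>A\<in>\<A>. ess_diam M \<rho> A < ereal \<epsilon>))"

definition semimetric_on :: "'a set \<Rightarrow> ('a \<Rightarrow> 'a \<Rightarrow> real) \<Rightarrow> bool" where
  "semimetric_on X d \<longleftrightarrow>
     (\<forall>x\<in>X. d x x = 0) \<and>
     (\<forall>x\<in>X. \<forall>y\<in>X. 0 \<le> d x y \<and> d x y = d y x) \<and>
     (\<forall>x\<in>X. \<forall>y\<in>X. \<forall>z\<in>X. d x z \<le> d x y + d y z)"

definition separable_on :: "'a set \<Rightarrow> ('a \<Rightarrow> 'a \<Rightarrow> real) \<Rightarrow> bool" where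
  "separable_on X d \<longleftrightarrow>
     (\<exists>D. countable D \<and> D \<subseteq> X \<and> (\<forall>x\<in>X. \<forall>\<epsilon>>0. \<exists>c\<in>D. d x c < \<epsilon>))"

definition admissible :: "'a measure \<Rightarrow> ('a \<Rightarrow> 'a \<Rightarrow> real) \<Rightarrow> bool" where
  "admissible M d \<longleftrightarrow> semimetric_on (space M) d \<and>
     (\<exists>X0\<in>sets M. space M - X0 \<in> null_sets M \<and> separable_on X0 d)"

end

theory Submission
  imports Defs "HOL-Library.Diagonal_Subsequence"
begin

text \<open>
  Fix a countable family \<open>E\<^sub>i\<close> of measurable sets that separates the points of a conull set and
  generates the measure algebra of the Lebesgue space \<open>(X, \<mu>)\<close>; its first \<open>n\<close> members cut \<open>X\<close>
  into finitely many cells.  Averaging a function on \<open>X \<times> X\<close> over the product cells converges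
  in \<open>L\<^sup>1\<close>, hence almost everywhere along a subsequence, and this averaging preserves the triangle
  inequality between points whose cells have positive measure.  Applying it to the truncations
  \<open>min \<rho> k\<close> and taking \<open>sup\<^sub>k limsup\<close> gives an extended semimetric on a conull set of points that
  agrees with \<open>\<rho>\<close> almost everywhere.  It is finite on a conull set \<open>G\<close>; retracting every other point
  onto one point of \<open>G\<close> yields a real-valued semimetric on all of \<open>X\<close> (the diagonal is null because
  \<open>\<mu>\<close> is continuous).  Because the cell averages also converge for indicators of countably many sets
  \<open>H\<close>, the points of \<open>G\<close> are density points of the sets \<open>H\<close> containing them, so on \<open>G \<inter> H\<close> the new
  semimetric is bounded by the essential diameter of \<open>H\<close>; for \<open>\<rho>\<close> essentially separable this makes
  \<open>(X, \<tilde>\<rho>)\<close> separable.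
\<close>

lemma (in pair_sigma_finite) AE_pair_fstI:
  assumes "AE x in M1. P x"
  shows "AE q in M1 \<Otimes>\<^sub>M M2. P (fst q)"
proof -
  obtain N where N: "N \<in> null_sets M1" "{x\<in>space M1. \<not> P x} \<subseteq> N"
    using assms by (auto simp: eventually_ae_filter)
  have "N \<times> space M2 \<in> null_sets (M1 \<Otimes>\<^sub>M M2)"
    using N(1) by (simp add: null_sets_def M2.emeasure_pair_measure_Times pair_measureI)
  moreover have "{q \<in> space (M1 \<Otimes>\<^sub>M M2). \<not> P (fst q)} \<subseteq> N \<times> space M2"
    using N(2) by (auto simp: space_pair_measure)
  ultimately show ?thesis by (auto simp: eventually_ae_filter)
qed

lemma (in pair_sigma_finite) AE_pair_sndI:
  assumes "AE y in M2. P y"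
  shows "AE q in M1 \<Otimes>\<^sub>M M2. P (snd q)"
proof -
  obtain N where N: "N \<in> null_sets M2" "{y\<in>space M2. \<not> P y} \<subseteq> N"
    using assms by (auto simp: eventually_ae_filter)
  have "space M1 \<times> N \<in> null_sets (M1 \<Otimes>\<^sub>M M2)"
    using N(1) by (simp add: null_sets_def M2.emeasure_pair_measure_Times pair_measureI)
  moreover have "{q \<in> space (M1 \<Otimes>\<^sub>M M2). \<not> P (snd q)} \<subseteq> space M1 \<times> N"
    using N(2) by (auto simp: space_pair_measure)
  ultimately show ?thesis by (auto simp: eventually_ae_filter)
qed

lemma (in pair_sigma_finite) AE_pair_swap:
  assumes "AE q in M1 \<Otimes>\<^sub>M M2. P q"
  shows "AE q in M2 \<Otimes>\<^sub>M M1. P (snd q, fst q)"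
proof -
  have "AE q in distr (M2 \<Otimes>\<^sub>M M1) (M1 \<Otimes>\<^sub>M M2) (\<lambda>(x, y). (y, x)). P q"
    using assms by (subst (asm) distr_pair_swap)
  from AE_distrD[OF measurable_pair_swap' this] show ?thesis
    by (simp add: case_prod_beta)
qed

lemma (in prob_space) AE_obtain_point:
  assumes "AE x in M. P x"
  obtains x where "x \<in> space M" "P x"
proof -
  have "\<not> (AE x in M. False)" by simp
  then show ?thesis using assms that by (metis (mono_tags, lifting) AE_mp AE_I2)
qed

lemma SUP_ereal_min_of_nat:
  fixes a :: real
  assumes "0 \<le> a"
  shows "(SUP k::nat. ereal (min a (real k))) = ereal a"
proof (rule antisym)
  show "(SUP k::nat. ereal (min a (real k))) \<le> ereal a" by (rule SUP_least) auto
  obtain k :: nat where "a \<le> real k" using real_arch_simple by blast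
  then have "ereal a = ereal (min a (real k))" by simp
  also have "\<dots> \<le> (SUP k::nat. ereal (min a (real k)))" by (rule SUP_upper) auto
  finally show "ereal a \<le> (SUP k::nat. ereal (min a (real k)))" .
qed

lemma real_of_ereal_triangle:
  fixes u v w :: ereal
  assumes "u \<le> v + w" "0 \<le> u" "0 \<le> v" "0 \<le> w" "v < \<infinity>" "w < \<infinity>"
  shows "real_of_ereal u \<le> real_of_ereal v + real_of_ereal w"
  using assms by (cases u; cases v; cases w) auto


section \<open>Collapsing an extended semimetric\<close>

text \<open>Every point outside \<open>G\<close> is identified with the base point \<open>x\<^sub>0 \<in> G\<close>; the explicit \<open>0\<close> on
  identified points is needed because \<open>d\<close> need not vanish on the diagonal.\<close>

definition retract :: "'a set \<Rightarrow> 'a \<Rightarrow> 'a \<Rightarrow> 'a" where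
  "retract G x\<^sub>0 x = (if x \<in> G then x else x\<^sub>0)"

definition collapse :: "'a set \<Rightarrow> 'a \<Rightarrow> ('a \<Rightarrow> 'a \<Rightarrow> ereal) \<Rightarrow> 'a \<Rightarrow> 'a \<Rightarrow> real" where
  "collapse G x\<^sub>0 d x y =
     (if retract G x\<^sub>0 x = retract G x\<^sub>0 y then 0
      else real_of_ereal (d (retract G x\<^sub>0 x) (retract G x\<^sub>0 y)))"

lemma retract_in: "x\<^sub>0 \<in> G \<Longrightarrow> retract G x\<^sub>0 x \<in> G"
  by (simp add: retract_def)

lemma collapse_eq: "x \<in> G \<Longrightarrow> y \<in> G \<Longrightarrow> x \<noteq> y \<Longrightarrow> collapse G x\<^sub>0 d x y = real_of_ereal (d x y)"
  by (simp add: collapse_def retract_def)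

lemma collapse_retract_eq_0: "x\<^sub>0 \<in> G \<Longrightarrow> collapse G x\<^sub>0 d x (retract G x\<^sub>0 x) = 0"
  by (simp add: collapse_def retract_def)

lemma collapse_le: "x \<in> G \<Longrightarrow> y \<in> G \<Longrightarrow> d x y \<le> ereal e \<Longrightarrow> 0 \<le> e \<Longrightarrow> collapse G x\<^sub>0 d x y \<le> e"
  by (cases "d x y") (auto simp: collapse_def retract_def)

lemma semimetric_on_collapse:
  assumes "x\<^sub>0 \<in> G"
    and nonneg: "\<And>x y. x \<in> G \<Longrightarrow> y \<in> G \<Longrightarrow> 0 \<le> d x y"
    and commute: "\<And>x y. x \<in> G \<Longrightarrow> y \<in> G \<Longrightarrow> d x y = d y x"
    and triangle: "\<And>x y z. x \<in> G \<Longrightarrow> y \<in> G \<Longrightarrow> z \<in> G \<Longrightarrow> d x z \<le> d x y + d y z"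
    and finite: "\<And>x y. x \<in> G \<Longrightarrow> y \<in> G \<Longrightarrow> d x y < \<infinity>"
  shows "semimetric_on X (collapse G x\<^sub>0 d)"
proof -
  let ?d = "collapse G x\<^sub>0 d"
  have G: "retract G x\<^sub>0 x \<in> G" for x using assms(1) by (rule retract_in)
  have ge_0: "0 \<le> ?d x y" for x y
    using nonneg[OF G G] by (simp add: collapse_def real_of_ereal_pos)
  have "?d x z \<le> ?d x y + ?d y z" for x y z
  proof -
    let ?a = "retract G x\<^sub>0 x" and ?b = "retract G x\<^sub>0 y" and ?c = "retract G x\<^sub>0 z"
    consider "?a = ?c" | "?a = ?b" | "?b = ?c" | "?a \<noteq> ?b" "?b \<noteq> ?c" "?a \<noteq> ?c" by blast
    then show ?thesis
    proof cases
      case 4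
      have "real_of_ereal (d ?a ?c) \<le> real_of_ereal (d ?a ?b) + real_of_ereal (d ?b ?c)"
        by (intro real_of_ereal_triangle triangle nonneg finite G)
      with 4 show ?thesis by (simp add: collapse_def)
    qed (use ge_0[of x y] ge_0[of y z] in \<open>auto simp: collapse_def\<close>)
  qed
  then show ?thesis
    using ge_0 commute[OF G G] unfolding semimetric_on_def by (auto simp: collapse_def)
qed


section \<open>Integrated triangle inequality\<close>

lemma (in finite_measure) integrable_indicator_finite[simp]:
  "A \<in> sets M \<Longrightarrow> integrable M (indicator A :: _ \<Rightarrow> real)"
  by (simp add: less_top[symmetric])

context prob_space
begin

lemma integrable_bounded:
  fixes f :: "'a \<Rightarrow> real"
  shows "f \<in> borel_measurable M \<Longrightarrow> (\<And>x. x \<in> space M \<Longrightarrow> \<bar>f x\<bar> \<le> K) \<Longrightarrow> integrable M f"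
  by (rule integrable_const_bound[where B=K]) auto

lemma abs_integral_le_bound:
  fixes f :: "'a \<Rightarrow> real"
  assumes "\<And>x. x \<in> space M \<Longrightarrow> \<bar>f x\<bar> \<le> K"
  shows "\<bar>integral\<^sup>L M f\<bar> \<le> K"
proof -
  have "0 \<le> K" using assms not_empty by (meson abs_ge_zero ex_in_conv order_trans)
  have "\<bar>integral\<^sup>L M f\<bar> \<le> (\<integral>x. \<bar>f x\<bar> \<partial>M)"
    using integral_norm_bound[of M f] by simp
  also have "\<dots> \<le> (\<integral>x. K \<partial>M)"
    using assms \<open>0 \<le> K\<close> by (intro integral_mono_AE' AE_I2) auto
  finally show ?thesis by (simp add: prob_space)
qed

lemma integral_section_triangle:
  fixes r :: "'a \<times> 'a \<Rightarrow> real"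
  assumes r[measurable]: "r \<in> borel_measurable (M \<Otimes>\<^sub>M M)" and D[measurable]: "D \<in> sets M"
    and bnd: "\<And>q. \<bar>r q\<bar> \<le> K" and x: "x \<in> space M" and y: "y \<in> space M"
    and tri: "AE z in M. r (x, z) \<le> r (x, y) + r (y, z)"
  shows "(\<integral>z. indicator D z * r (x, z) \<partial>M) \<le> measure M D * r (x, y) + (\<integral>z. indicator D z * r (y, z) \<partial>M)"
proof -
  have "0 \<le> K" using bnd by (rule order_trans[OF abs_ge_zero])
  have int: "integrable M (\<lambda>z. indicator D z * r (w, z))" if "w \<in> space M" for w
    using that bnd \<open>0 \<le> K\<close> by (intro integrable_bounded[where K=K]) (auto simp: indicator_def abs_mult)
  have int_const: "integrable M (\<lambda>z. indicator D z * c)" for c :: real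
    using D by (intro integrable_mult_left integrable_indicator_finite)
  have "(\<integral>z. indicator D z * r (x, z) \<partial>M) \<le> (\<integral>z. indicator D z * r (x, y) + indicator D z * r (y, z) \<partial>M)"
    using tri by (intro integral_mono_AE int x Bochner_Integration.integrable_add y int_const)
      (auto elim!: eventually_mono simp: indicator_def)
  also have "\<dots> = (\<integral>z. indicator D z * r (x, y) \<partial>M) + (\<integral>z. indicator D z * r (y, z) \<partial>M)"
    by (intro Bochner_Integration.integral_add int y int_const)
  also have "(\<integral>z. indicator D z * r (x, y) \<partial>M) = measure M D * r (x, y)"
    by simp
  finally show ?thesis .
qed

lemma integral_rect_triangle:
  fixes r :: "'a \<times> 'a \<Rightarrow> real"
  assumes r[measurable]: "r \<in> borel_measurable (M \<Otimes>\<^sub>M M)" and nn: "\<And>q. 0 \<le> r q" and bnd: "\<And>q. r q \<le> K"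
    and tri: "AE x in M. AE y in M. AE z in M. r (x, z) \<le> r (x, y) + r (y, z)"
    and [measurable]: "B \<in> sets M" and C[measurable]: "C \<in> sets M" and D[measurable]: "D \<in> sets M"
  shows "measure M B * (\<integral>q. indicator (C \<times> D) q * r q \<partial>(M \<Otimes>\<^sub>M M))
     \<le> measure M D * (\<integral>q. indicator (C \<times> B) q * r q \<partial>(M \<Otimes>\<^sub>M M))
       + measure M C * (\<integral>q. indicator (B \<times> D) q * r q \<partial>(M \<Otimes>\<^sub>M M))"
proof -
  interpret P: pair_prob_space M M ..
  have abs_r: "\<bar>r q\<bar> \<le> K" for q using nn[of q] bnd[of q] by simp
  have "0 \<le> K" using nn bnd order_trans by blast
  define sec where "sec A x = (\<integral>z. indicator A z * r (x, z) \<partial>M)" for A x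
  have [measurable]: "sec A \<in> borel_measurable M" if [measurable]: "A \<in> sets M" for A
    unfolding sec_def by measurable
  have abs_sec: "\<bar>sec A x\<bar> \<le> K" for A x
    unfolding sec_def
      using abs_r \<open>0 \<le> K\<close> by (intro abs_integral_le_bound) (auto simp: indicator_def abs_mult)
  have int_sec: "integrable M (\<lambda>x. c * (indicator A' x * sec A x))" if "A \<in> sets M" "A' \<in> sets M" for A A' c
    using that abs_sec \<open>0 \<le> K\<close> by (intro integrable_bounded[where K="\<bar>c\<bar> * K"])
      (auto simp: indicator_def abs_mult intro!: mult_left_mono)
  have int_r: "integrable M (\<lambda>y. c * (indicator A y * r (x, y)))" if "A \<in> sets M" "x \<in> space M" for A x c
    using that abs_r \<open>0 \<le> K\<close> by (intro integrable_bounded[where K="\<bar>c\<bar> * K"])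
      (auto simp: indicator_def abs_mult intro!: mult_left_mono)
  have sec_rect: "(\<integral>x. indicator A x * sec A' x \<partial>M) = (\<integral>q. indicator (A \<times> A') q * r q \<partial>(M \<Otimes>\<^sub>M M))"
    if [measurable]: "A \<in> sets M" "A' \<in> sets M" for A A'
  proof -
    have "integrable (M \<Otimes>\<^sub>M M) (\<lambda>q. indicator (A \<times> A') q * r q)"
      using abs_r \<open>0 \<le> K\<close>
        by (intro P.integrable_const_bound[where B=K] AE_I2) (auto simp: indicator_def abs_mult)
    from P.integral_fst'[OF this] show ?thesis
      by (simp add: sec_def indicator_times mult.assoc)
  qed
  let ?c = "\<integral>y. indicator B y * sec D y \<partial>M"
  have "AE x in M. measure M B * sec D x \<le> measure M D * sec B x + ?c"
  proof (rule AE_mp[OF tri AE_I2], intro impI)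
    fix x assume x: "x \<in> space M" and ae_x: "AE y in M. AE z in M. r (x, z) \<le> r (x, y) + r (y, z)"
    from ae_x have "AE y in M. sec D x \<le> measure M D * r (x, y) + sec D y"
      using AE_space by eventually_elim (simp add: sec_def integral_section_triangle[OF r _ abs_r x])
    then have "AE y in M. sec D x * (indicator B y * 1)
        \<le> measure M D * (indicator B y * r (x, y)) + 1 * (indicator B y * sec D y)"
      by eventually_elim (simp add: indicator_def)
    then have "(\<integral>y. sec D x * (indicator B y * 1) \<partial>M)
        \<le> (\<integral>y. measure M D * (indicator B y * r (x, y)) + 1 * (indicator B y * sec D y) \<partial>M)"
      using x by (intro integral_mono_AE Bochner_Integration.integrable_add int_sec int_r) auto
    then show "measure M B * sec D x \<le> measure M D * sec B x + ?c"
      using x int_r[of B x "measure M D"] int_sec[of D B 1]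
      by (simp add: Bochner_Integration.integral_add sec_def mult.commute)
  qed
  then have "(\<integral>x. measure M B * (indicator C x * sec D x) \<partial>M)
      \<le> (\<integral>x. measure M D * (indicator C x * sec B x) + ?c * (indicator C x * 1) \<partial>M)"
    using C by (intro integral_mono_AE Bochner_Integration.integrable_add int_sec
        integrable_mult_right integrable_mult_left integrable_indicator_finite)
      (auto elim!: eventually_mono simp: indicator_def)
  then have "measure M B * (\<integral>x. indicator C x * sec D x \<partial>M)
      \<le> measure M D * (\<integral>x. indicator C x * sec B x \<partial>M) + measure M C * ?c"
    using int_sec[of B C "measure M D"] by (simp add: Bochner_Integration.integral_add mult.commute)
  then show ?thesis by (simp add: sec_rect)
qed

end

section \<open>Cells and cell averages\<close>

locale cell_system = prob_space M for M :: "'a measure" +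
  fixes E :: "nat \<Rightarrow> 'a set"
  assumes sets_E[measurable]: "\<And>i. E i \<in> sets M"
begin

definition cell :: "nat \<Rightarrow> 'a \<Rightarrow> 'a set" where
  "cell n x = {y \<in> space M. \<forall>i<n. (y \<in> E i \<longleftrightarrow> x \<in> E i)}"

definition cells :: "nat \<Rightarrow> 'a set set" where
  "cells n = cell n ` space M"

lemma sets_cell[measurable]: "cell n x \<in> sets M"
  unfolding cell_def by measurable

lemma cell_subset_space: "cell n x \<subseteq> space M"
  by (auto simp: cell_def)

lemma mem_cell_self: "x \<in> space M \<Longrightarrow> x \<in> cell n x"
  by (auto simp: cell_def)

lemma cell_eqI: "y \<in> cell n x \<Longrightarrow> cell n y = cell n x"
  by (auto simp: cell_def)

lemma cell_antimono: "m \<le> n \<Longrightarrow> cell n x \<subseteq> cell m x"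
  by (auto simp: cell_def)

lemma finite_cells: "finite (cells n)"
proof -
  have "cells n \<subseteq> (\<lambda>I. {y \<in> space M. \<forall>i<n. (y \<in> E i \<longleftrightarrow> i \<in> I)}) ` Pow {..<n}"
    unfolding cells_def cell_def
    by (rule image_subsetI, rule image_eqI[where x="{i. i<n \<and> _ \<in> E i}"]) auto
  then show ?thesis by (rule finite_subset) auto
qed

lemma sets_cells: "C \<in> cells n \<Longrightarrow> C \<in> sets M"
  by (auto simp: cells_def)

lemma cells_eq_cell: "C \<in> cells n \<Longrightarrow> x \<in> C \<Longrightarrow> C = cell n x"
  by (auto simp: cells_def dest: cell_eqI)

lemma cell_in_cells: "x \<in> space M \<Longrightarrow> cell n x \<in> cells n"
  by (auto simp: cells_def)

sublocale P: pair_prob_space M M by unfold_locales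

abbreviation PM where "PM \<equiv> M \<Otimes>\<^sub>M M"

lemma measure_PM_Times: "A \<in> sets M \<Longrightarrow> B \<in> sets M \<Longrightarrow> measure PM (A \<times> B) = measure M A * measure M B"
  by (simp add: measure_def emeasure_pair_measure_Times enn2real_mult)

lemma sets_cell_rect[measurable]: "CD \<in> cells n \<times> cells n \<Longrightarrow> fst CD \<times> snd CD \<in> sets PM"
  by (auto intro!: pair_measureI sets_cells)

text \<open>When \<open>C \<times> D\<close> is null, division by zero makes the average \<open>0\<close>.\<close>
definition rect_avg :: "('a \<times> 'a \<Rightarrow> real) \<Rightarrow> 'a set \<times> 'a set \<Rightarrow> real" where
  "rect_avg h CD = (\<integral>q. indicator (fst CD \<times> snd CD) q * h q \<partial>PM) / (measure M (fst CD) * measure M (snd CD))"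

definition cell_avg :: "nat \<Rightarrow> ('a \<times> 'a \<Rightarrow> real) \<Rightarrow> 'a \<times> 'a \<Rightarrow> real" where
  "cell_avg n h p = rect_avg h (cell n (fst p), cell n (snd p))"

lemma cell_avg_def':
  "cell_avg n h p = (\<integral>q. indicator (cell n (fst p) \<times> cell n (snd p)) q * h q \<partial>PM)
     / (measure M (cell n (fst p)) * measure M (cell n (snd p)))"
  by (simp add: cell_avg_def rect_avg_def)

lemma indicator_cell_rect:
  assumes "p \<in> space PM" "CD \<in> cells n \<times> cells n"
  shows "indicator (fst CD \<times> snd CD) p = (if CD = (cell n (fst p), cell n (snd p)) then 1 else (0::real))"
proof -
  obtain C D where CD: "CD = (C, D)" "C \<in> cells n" "D \<in> cells n" using assms(2) by auto
  have sp: "fst p \<in> space M" "snd p \<in> space M" using assms(1) by (auto simp: space_pair_measure)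
  have "p \<in> C \<times> D \<longleftrightarrow> C = cell n (fst p) \<and> D = cell n (snd p)"
    using CD sp cells_eq_cell[of C n "fst p"] cells_eq_cell[of D n "snd p"] mem_cell_self
    by (cases p) auto
  then show ?thesis using CD by (simp add: indicator_def)
qed

lemma sum_indicator_cell_rect:
  assumes "p \<in> space PM"
  shows "(\<Sum>CD\<in>cells n \<times> cells n. indicator (fst CD \<times> snd CD) p * f CD)
    = (f (cell n (fst p), cell n (snd p)) :: real)"
proof -
  have "(\<Sum>CD\<in>cells n \<times> cells n. indicator (fst CD \<times> snd CD) p * f CD)
      = (\<Sum>CD\<in>cells n \<times> cells n. if CD = (cell n (fst p), cell n (snd p)) then f CD else 0)"
    by (intro sum.cong refl) (simp add: indicator_cell_rect[OF assms])
  moreover have "fst p \<in> space M" "snd p \<in> space M" using assms by (auto simp: space_pair_measure)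
  ultimately show ?thesis by (simp add: sum.delta' finite_cells cell_in_cells)
qed

lemma cell_avg_eq_sum:
  assumes "p \<in> space PM"
  shows "cell_avg n h p = (\<Sum>CD\<in>cells n \<times> cells n. indicator (fst CD \<times> snd CD) p * rect_avg h CD)"
  by (simp add: sum_indicator_cell_rect[OF assms] cell_avg_def)

lemma integrable_cell_avg: "integrable PM (cell_avg n h)"
proof -
  have "integrable PM (\<lambda>p. \<Sum>CD\<in>cells n \<times> cells n. indicator (fst CD \<times> snd CD) p * rect_avg h CD)"
    by (intro Bochner_Integration.integrable_sum integrable_mult_left) auto
  then show ?thesis
    by (simp add: Bochner_Integration.integrable_cong[OF refl cell_avg_eq_sum])
qed

lemma integrable_indicator_mult:
  "A \<in> sets PM \<Longrightarrow> integrable PM f \<Longrightarrow> integrable PM (\<lambda>q. indicator A q * f q :: real)"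
  using integrable_mult_indicator[of A PM f] by simp

lemma measure_rect_mult_rect_avg:
  assumes "C \<in> cells n" "D \<in> cells n"
  shows "measure PM (C \<times> D) * rect_avg f (C, D) = (\<integral>q. indicator (C \<times> D) q * f q \<partial>PM)"
proof -
  have m: "measure PM (C \<times> D) = measure M C * measure M D"
    using assms by (simp add: measure_PM_Times sets_cells)
  show ?thesis
  proof (cases "measure PM (C \<times> D) = 0")
    case True
    then have "C \<times> D \<in> null_sets PM"
      using assms by (simp add: null_sets_def P.emeasure_eq_measure pair_measureI sets_cells)
    then have "(\<integral>q. indicator (C \<times> D) q * f q \<partial>PM) = 0"
      by (intro integral_eq_zero_AE) (auto intro: AE_mp[OF AE_not_in] AE_I2)
    then show ?thesis using True by simp
  next
    case False
    then show ?thesis using m by (simp add: rect_avg_def)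
  qed
qed

lemma integral_cell_avg:
  assumes f: "integrable PM f"
  shows "integral\<^sup>L PM (cell_avg n f) = integral\<^sup>L PM f"
proof -
  have "integral\<^sup>L PM (cell_avg n f)
      = (\<integral>p. (\<Sum>CD\<in>cells n \<times> cells n. indicator (fst CD \<times> snd CD) p * rect_avg f CD) \<partial>PM)"
    by (intro Bochner_Integration.integral_cong refl) (simp add: cell_avg_eq_sum)
  also have "\<dots> = (\<Sum>CD\<in>cells n \<times> cells n. measure PM (fst CD \<times> snd CD) * rect_avg f CD)"
    by (subst Bochner_Integration.integral_sum) (auto intro!: integrable_mult_left pair_measureI sets_cells)
  also have "\<dots> = (\<Sum>CD\<in>cells n \<times> cells n. (\<integral>q. indicator (fst CD \<times> snd CD) q * f q \<partial>PM))"
    by (intro sum.cong refl) (auto intro: measure_rect_mult_rect_avg)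
  also have "\<dots> = (\<integral>q. (\<Sum>CD\<in>cells n \<times> cells n. indicator (fst CD \<times> snd CD) q * f q) \<partial>PM)"
    by (rule Bochner_Integration.integral_sum[symmetric])
      (auto intro!: integrable_indicator_mult f pair_measureI sets_cells)
  also have "\<dots> = integral\<^sup>L PM f"
    by (intro Bochner_Integration.integral_cong refl) (simp add: sum_indicator_cell_rect)
  finally show ?thesis .
qed

lemma cell_avg_add:
  assumes "integrable PM f" "integrable PM g"
  shows "cell_avg n (\<lambda>q. f q + g q) p = cell_avg n f p + cell_avg n g p"
proof -
  let ?I = "indicator (cell n (fst p) \<times> cell n (snd p)) :: _ \<Rightarrow> real"
  have "(\<integral>q. ?I q * (f q + g q) \<partial>PM) = (\<integral>q. ?I q * f q + ?I q * g q \<partial>PM)"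
    by (simp add: algebra_simps)
  also have "\<dots> = (\<integral>q. ?I q * f q \<partial>PM) + (\<integral>q. ?I q * g q \<partial>PM)"
    by (rule Bochner_Integration.integral_add) (auto intro!: integrable_indicator_mult assms)
  finally show ?thesis by (simp add: cell_avg_def' add_divide_distrib)
qed

lemma cell_avg_cmult: "cell_avg n (\<lambda>q. c * f q) p = c * cell_avg n f p"
  by (simp add: cell_avg_def' algebra_simps)

lemma cell_avg_diff:
  assumes "integrable PM f" "integrable PM g"
  shows "cell_avg n (\<lambda>q. f q - g q) p = cell_avg n f p - cell_avg n g p"
proof -
  let ?I = "indicator (cell n (fst p) \<times> cell n (snd p)) :: _ \<Rightarrow> real"
  have "(\<integral>q. ?I q * (f q - g q) \<partial>PM) = (\<integral>q. ?I q * f q - ?I q * g q \<partial>PM)"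
    by (simp add: algebra_simps)
  also have "\<dots> = (\<integral>q. ?I q * f q \<partial>PM) - (\<integral>q. ?I q * g q \<partial>PM)"
    by (rule Bochner_Integration.integral_diff) (auto intro!: integrable_indicator_mult assms)
  finally show ?thesis by (simp add: cell_avg_def' diff_divide_distrib)
qed

lemma cell_avg_cong_AE:
  assumes "AE q in PM. f q = g q" "f \<in> borel_measurable PM" "g \<in> borel_measurable PM"
  shows "cell_avg n f p = cell_avg n g p"
proof -
  have "(\<integral>q. indicator (cell n (fst p) \<times> cell n (snd p)) q * f q \<partial>PM)
     = (\<integral>q. indicator (cell n (fst p) \<times> cell n (snd p)) q * g q \<partial>PM)"
    by (rule integral_cong_AE) (use assms in auto)
  then show ?thesis by (simp add: cell_avg_def')
qed

lemma cell_avg_nonneg: "(\<And>q. 0 \<le> f q) \<Longrightarrow> 0 \<le> cell_avg n f p"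
  unfolding cell_avg_def' by (intro divide_nonneg_nonneg integral_nonneg_AE AE_I2) auto

lemma abs_cell_avg_le:
  assumes "integrable PM f"
  shows "\<bar>cell_avg n f p\<bar> \<le> cell_avg n (\<lambda>q. \<bar>f q\<bar>) p"
proof -
  let ?I = "indicator (cell n (fst p) \<times> cell n (snd p)) :: _ \<Rightarrow> real"
  have "\<bar>\<integral>q. ?I q * f q \<partial>PM\<bar> \<le> (\<integral>q. \<bar>?I q * f q\<bar> \<partial>PM)"
    using integral_norm_bound[of PM "\<lambda>q. ?I q * f q"] by simp
  also have "\<dots> = (\<integral>q. ?I q * \<bar>f q\<bar> \<partial>PM)"
    by (simp add: abs_mult)
  finally show ?thesis by (simp add: cell_avg_def' abs_div_pos divide_right_mono)
qed

lemma L1_cell_avg_le: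
  assumes "integrable PM f"
  shows "(\<integral>q. \<bar>cell_avg n f q\<bar> \<partial>PM) \<le> (\<integral>q. \<bar>f q\<bar> \<partial>PM)"
proof -
  have "(\<integral>q. \<bar>cell_avg n f q\<bar> \<partial>PM) \<le> (\<integral>q. cell_avg n (\<lambda>q. \<bar>f q\<bar>) q \<partial>PM)"
    by (intro integral_mono integrable_cell_avg abs_cell_avg_le assms integrable_abs)
  also have "\<dots> = (\<integral>q. \<bar>f q\<bar> \<partial>PM)"
    by (intro integral_cell_avg integrable_abs assms)
  finally show ?thesis .
qed

lemma cell_avg_triangle:
  fixes r :: "'a \<times> 'a \<Rightarrow> real"
  assumes r[measurable]: "r \<in> borel_measurable PM" and nn: "\<And>q. 0 \<le> r q" and b: "\<And>q. r q \<le> K"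
    and tri: "AE x in M. AE y in M. AE z in M. r (x, z) \<le> r (x, y) + r (y, z)"
    and px: "measure M (cell n x) \<noteq> 0" and py: "measure M (cell n y) \<noteq> 0" and pz: "measure M (cell n z) \<noteq> 0"
  shows "cell_avg n r (x, z) \<le> cell_avg n r (x, y) + cell_avg n r (y, z)"
proof -
  let ?C = "cell n x" and ?B = "cell n y" and ?D = "cell n z"
  let ?I = "\<lambda>C D. (\<integral>q. indicator (C \<times> D) q * r q \<partial>PM)"
  have main: "measure M ?B * ?I ?C ?D \<le> measure M ?D * ?I ?C ?B + measure M ?C * ?I ?B ?D"
    by (rule integral_rect_triangle[OF r nn b tri]) auto
  have pos: "0 < measure M ?C" "0 < measure M ?B" "0 < measure M ?D"
    using px py pz by (auto simp: zero_less_measure_iff measure_nonneg order_le_less)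
  have "cell_avg n r (x, z) = ?I ?C ?D / (measure M ?C * measure M ?D)" by (simp add: cell_avg_def')
  also have "\<dots> = (measure M ?B * ?I ?C ?D) / (measure M ?C * measure M ?B * measure M ?D)"
    using pos by (simp add: field_simps)
  also have "\<dots> \<le> (measure M ?D * ?I ?C ?B + measure M ?C * ?I ?B ?D)
      / (measure M ?C * measure M ?B * measure M ?D)"
    using pos main by (intro divide_right_mono) auto
  also have "\<dots> = ?I ?C ?B / (measure M ?C * measure M ?B) + ?I ?B ?D / (measure M ?B * measure M ?D)"
    using pos by (simp add: field_simps)
  also have "\<dots> = cell_avg n r (x, y) + cell_avg n r (y, z)" by (simp add: cell_avg_def')
  finally show ?thesis .
qed

section \<open>\<open>L\<^sup>1\<close> convergence of cell averages\<close>

abbreviation avg_error :: "nat \<Rightarrow> ('a \<times> 'a \<Rightarrow> real) \<Rightarrow> real" where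
  "avg_error n h \<equiv> \<integral>q. \<bar>cell_avg n h q - h q\<bar> \<partial>PM"

definition L1_avg_convergent :: "('a \<times> 'a \<Rightarrow> real) \<Rightarrow> bool" where
  "L1_avg_convergent h \<longleftrightarrow> integrable PM h \<and> (\<lambda>n. avg_error n h) \<longlonglongrightarrow> 0"

lemma L1_avg_error_le:
  fixes h g :: "'a \<times> 'a \<Rightarrow> real"
  assumes h: "integrable PM h" and g: "integrable PM g"
  shows "avg_error n h \<le> 2 * (\<integral>q. \<bar>h q - g q\<bar> \<partial>PM) + avg_error n g"
proof -
  have hg: "integrable PM (\<lambda>q. h q - g q)" using h g by auto
  have eq: "\<And>q. cell_avg n h q - h q = cell_avg n (\<lambda>q. h q - g q) q + (cell_avg n g q - g q) + (g q - h q)"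
    using cell_avg_diff[OF h g] by simp
  have "avg_error n h \<le> (\<integral>q. \<bar>cell_avg n (\<lambda>q. h q - g q) q\<bar> + \<bar>cell_avg n g q - g q\<bar> + \<bar>h q - g q\<bar> \<partial>PM)"
    by (intro integral_mono)
      (auto intro!: Bochner_Integration.integrable_add Bochner_Integration.integrable_diff integrable_abs
        integrable_cell_avg h g simp: eq)
  also have "\<dots> = (\<integral>q. \<bar>cell_avg n (\<lambda>q. h q - g q) q\<bar> \<partial>PM) + avg_error n g + (\<integral>q. \<bar>h q - g q\<bar> \<partial>PM)"
    using h g by (simp add: integrable_cell_avg)
  also have "\<dots> \<le> (\<integral>q. \<bar>h q - g q\<bar> \<partial>PM) + avg_error n g + (\<integral>q. \<bar>h q - g q\<bar> \<partial>PM)"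
    using L1_cell_avg_le[OF hg, of n] by simp
  finally show ?thesis by simp
qed

lemma L1_avg_convergent_approx:
  fixes h :: "'a \<times> 'a \<Rightarrow> real"
  assumes h: "integrable PM h" and s: "\<And>m. L1_avg_convergent (s m)"
    and lim: "(\<lambda>m. \<integral>q. \<bar>h q - s m q\<bar> \<partial>PM) \<longlonglongrightarrow> 0"
  shows "L1_avg_convergent h"
  unfolding L1_avg_convergent_def
proof (intro conjI h LIMSEQ_I)
  fix r :: real assume r: "0 < r"
  from LIMSEQ_D[OF lim, of "r/4"] r obtain m where m: "\<bar>\<integral>q. \<bar>h q - s m q\<bar> \<partial>PM\<bar> < r/4"
    by auto
  have sm: "integrable PM (s m)" "(\<lambda>n. avg_error n (s m)) \<longlonglongrightarrow> 0"
    using s[of m] by (auto simp: L1_avg_convergent_def)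
  from LIMSEQ_D[OF sm(2), of "r/4"] r obtain N where N: "\<And>n. N \<le> n \<Longrightarrow> \<bar>avg_error n (s m)\<bar> < r/4"
    by auto
  show "\<exists>N. \<forall>n\<ge>N. norm (avg_error n h - 0) < r"
  proof (intro exI allI impI)
    fix n assume "N \<le> n"
    have "avg_error n h \<le> 2 * (\<integral>q. \<bar>h q - s m q\<bar> \<partial>PM) + avg_error n (s m)"
      by (rule L1_avg_error_le[OF h sm(1)])
    moreover have "0 \<le> avg_error n h" by simp
    ultimately show "norm (avg_error n h - 0) < r"
      using m N[OF \<open>N \<le> n\<close>] by (simp; linarith)
  qed
qed

lemma L1_avg_convergent_add:
  fixes f g :: "'a \<times> 'a \<Rightarrow> real"
  assumes "L1_avg_convergent f" "L1_avg_convergent g"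
  shows "L1_avg_convergent (\<lambda>q. f q + g q)"
proof -
  have f: "integrable PM f" "(\<lambda>n. avg_error n f) \<longlonglongrightarrow> 0" using assms by (auto simp: L1_avg_convergent_def)
  have g: "integrable PM g" "(\<lambda>n. avg_error n g) \<longlonglongrightarrow> 0" using assms by (auto simp: L1_avg_convergent_def)
  have le: "(\<integral>q. \<bar>cell_avg n (\<lambda>q. f q + g q) q - (f q + g q)\<bar> \<partial>PM) \<le> avg_error n f + avg_error n g" for n
  proof -
    have "(\<integral>q. \<bar>cell_avg n (\<lambda>q. f q + g q) q - (f q + g q)\<bar> \<partial>PM)
        \<le> (\<integral>q. \<bar>cell_avg n f q - f q\<bar> + \<bar>cell_avg n g q - g q\<bar> \<partial>PM)"
      by (intro integral_mono)
        (auto intro!: Bochner_Integration.integrable_add Bochner_Integration.integrable_diff integrable_abs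
          integrable_cell_avg f g simp: cell_avg_add[OF f(1) g(1)])
    also have "\<dots> = avg_error n f + avg_error n g"
      using f g by (simp add: integrable_cell_avg)
    finally show ?thesis .
  qed
  have "(\<lambda>n. \<integral>q. \<bar>cell_avg n (\<lambda>q. f q + g q) q - (f q + g q)\<bar> \<partial>PM) \<longlonglongrightarrow> 0"
    by (rule real_tendsto_sandwich[of "\<lambda>_. 0" _ _ "\<lambda>n. avg_error n f + avg_error n g"])
       (use le f g tendsto_add[OF f(2) g(2)] in auto)
  then show ?thesis using f g by (simp add: L1_avg_convergent_def)
qed

lemma L1_avg_convergent_cmult:
  fixes f :: "'a \<times> 'a \<Rightarrow> real"
  assumes "L1_avg_convergent f"
  shows "L1_avg_convergent (\<lambda>q. c * f q)"
proof -
  have f: "integrable PM f" "(\<lambda>n. avg_error n f) \<longlonglongrightarrow> 0" using assms by (auto simp: L1_avg_convergent_def)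
  have "(\<lambda>n. \<bar>c\<bar> * avg_error n f) \<longlonglongrightarrow> \<bar>c\<bar> * 0"
    by (intro tendsto_mult tendsto_const f)
  moreover have "(\<integral>q. \<bar>cell_avg n (\<lambda>q. c * f q) q - c * f q\<bar> \<partial>PM) = \<bar>c\<bar> * avg_error n f" for n
    by (simp add: cell_avg_cmult right_diff_distrib[symmetric] abs_mult)
  ultimately show ?thesis using f by (simp add: L1_avg_convergent_def)
qed

lemma L1_avg_convergent_cong:
  fixes f g :: "'a \<times> 'a \<Rightarrow> real"
  assumes "L1_avg_convergent f" "\<And>q. q \<in> space PM \<Longrightarrow> f q = g q"
  shows "L1_avg_convergent g"
proof -
  have ae: "AE q in PM. f q = g q" using assms(2) by auto
  have ig: "integrable PM g"
    using assms by (metis (no_types, lifting) Bochner_Integration.integrable_cong L1_avg_convergent_def)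
  have fm: "f \<in> borel_measurable PM" using assms(1) by (auto simp: L1_avg_convergent_def)
  have gm: "g \<in> borel_measurable PM" using ig by auto
  moreover have "avg_error n g = avg_error n f" for n
    by (intro Bochner_Integration.integral_cong refl) (simp add: cell_avg_cong_AE[OF ae fm gm] assms(2))
  ultimately show ?thesis using assms(1) ig by (simp add: L1_avg_convergent_def)
qed

lemma AE_cell_measure_nonzero: "AE x in M. \<forall>n. measure M (cell n x) \<noteq> 0"
proof (subst AE_all_countable, intro allI)
  fix n
  let ?Z = "\<Union>{C \<in> cells n. measure M C = 0}"
  have "?Z \<in> null_sets M"
  proof (rule null_sets.finite_Union)
    show "finite {C \<in> cells n. measure M C = 0}" using finite_cells by auto
    show "{C \<in> cells n. measure M C = 0} \<subseteq> null_sets M"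
      using sets_cells by (auto simp: null_sets_def emeasure_eq_measure)
  qed
  then have "AE x in M. x \<notin> ?Z" by (rule AE_not_in)
  then show "AE x in M. measure M (cell n x) \<noteq> 0"
  proof (rule AE_mp, intro AE_I2 impI)
    fix x assume "x \<in> space M" "x \<notin> ?Z"
    then show "measure M (cell n x) \<noteq> 0"
      using cell_in_cells[of x n] mem_cell_self[of x n] by blast
  qed
qed

definition cell_saturated :: "nat \<Rightarrow> 'a set \<Rightarrow> bool" where
  "cell_saturated n U \<longleftrightarrow> U \<in> sets M \<and> (\<forall>x\<in>U. cell n x \<subseteq> U)"

lemma cell_saturated_mono: "cell_saturated N U \<Longrightarrow> N \<le> n \<Longrightarrow> cell_saturated n U"
  unfolding cell_saturated_def using cell_antimono by blast

lemma cell_saturated_UN_E: "I \<subseteq> {..<n} \<Longrightarrow> cell_saturated n (\<Union>i\<in>I. E i)"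
  unfolding cell_saturated_def cell_def
    using finite_subset[of I "{..<n}"] by (auto intro!: sets.finite_UN)

lemma cell_saturated_disjoint:
  assumes "cell_saturated n U" "x \<in> space M" "x \<notin> U"
  shows "cell n x \<inter> U = {}"
proof (rule ccontr)
  assume "cell n x \<inter> U \<noteq> {}"
  then obtain y where y: "y \<in> cell n x" "y \<in> U" by auto
  then have "cell n x \<subseteq> U" using assms(1) cell_eqI[OF y(1)] by (auto simp: cell_saturated_def)
  then show False using mem_cell_self[OF assms(2)] assms(3) by auto
qed

lemma L1_avg_convergent_saturated_rect:
  assumes U: "cell_saturated N U" and V: "cell_saturated N V"
  shows "L1_avg_convergent (indicator (U \<times> V))"
proof -
  have UV[measurable]: "U \<times> V \<in> sets PM"
    using U V by (auto simp: cell_saturated_def intro!: pair_measureI)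
  have "eventually (\<lambda>n. avg_error n (indicator (U \<times> V)) = 0) sequentially"
    unfolding eventually_sequentially
  proof (intro exI allI impI)
    fix n assume "N \<le> n"
    then have Un: "cell_saturated n U" and Vn: "cell_saturated n V"
      using U V cell_saturated_mono by blast+
    have "AE q in PM. \<bar>cell_avg n (indicator (U \<times> V)) q - indicator (U \<times> V) q\<bar> = 0"
      using P.AE_pair_fstI[OF AE_cell_measure_nonzero] P.AE_pair_sndI[OF AE_cell_measure_nonzero] AE_space
    proof eventually_elim
      case (elim q)
      then have sp: "fst q \<in> space M" "snd q \<in> space M" by (auto simp: space_pair_measure)
      let ?C = "cell n (fst q)" and ?D = "cell n (snd q)"
      have int_eq: "(\<integral>r. indicator (?C \<times> ?D) r * indicator (U \<times> V) r \<partial>PM) = measure PM ((?C \<times> ?D) \<inter> (U \<times> V))"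
        by (simp add: indicator_inter_arith[symmetric])
      have mCD: "measure PM (?C \<times> ?D) = measure M ?C * measure M ?D" by (simp add: measure_PM_Times)
      show ?case
      proof (cases "q \<in> U \<times> V")
        case True
        then have "?C \<subseteq> U" "?D \<subseteq> V" using Un Vn by (auto simp: cell_saturated_def mem_Times_iff)
        then have "(?C \<times> ?D) \<inter> (U \<times> V) = ?C \<times> ?D" by auto
        then show ?thesis using True elim int_eq mCD by (simp add: cell_avg_def')
      next
        case False
        then have "?C \<inter> U = {} \<or> ?D \<inter> V = {}"
          using cell_saturated_disjoint[OF Un sp(1)] cell_saturated_disjoint[OF Vn sp(2)]
            by (auto simp: mem_Times_iff)
        then have "(?C \<times> ?D) \<inter> (U \<times> V) = {}" by auto
        then show ?thesis using False int_eq by (simp add: cell_avg_def')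
      qed
    qed
    then show "avg_error n (indicator (U \<times> V)) = 0"
      by (rule integral_eq_zero_AE)
  qed
  then have "(\<lambda>n. avg_error n (indicator (U \<times> V))) \<longlonglongrightarrow> 0"
    by (rule tendsto_eventually)
  moreover have "integrable PM (indicator (U \<times> V) :: _ \<Rightarrow> real)"
    by simp
  ultimately show ?thesis by (simp add: L1_avg_convergent_def)
qed


lemma L1_dist_indicator_Times_le:
  assumes [measurable]: "S \<in> sets M" "T \<in> sets M" "U \<in> sets M" "V \<in> sets M"
  shows "(\<integral>q. \<bar>indicator (S \<times> T) q - indicator (U \<times> V) q :: real\<bar> \<partial>PM)
    \<le> measure M (sym_diff S U) + measure M (sym_diff T V)"
proof -
  have "(\<integral>q. \<bar>indicator (S \<times> T) q - indicator (U \<times> V) q :: real\<bar> \<partial>PM)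
      \<le> (\<integral>q. indicator (sym_diff S U \<times> space M) q + indicator (space M \<times> sym_diff T V) q \<partial>PM)"
  proof (rule Bochner_Integration.integral_mono)
    show "integrable PM (\<lambda>q. \<bar>indicator (S \<times> T) q - indicator (U \<times> V) q :: real\<bar>)"
      by (intro integrable_abs Bochner_Integration.integrable_diff integrable_indicator_finite) auto
    show "integrable PM (\<lambda>q. indicator (sym_diff S U \<times> space M) q + indicator (space M \<times> sym_diff T V) q :: real)"
      by (intro Bochner_Integration.integrable_add integrable_indicator_finite) auto
  qed (auto simp: indicator_def space_pair_measure)
  also have "\<dots> = measure M (sym_diff S U) + measure M (sym_diff T V)"
    by (simp add: measure_PM_Times prob_space)
  finally show ?thesis .
qed

end

locale generating_cell_system = cell_system +
  assumes approx_by_saturated: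
    "\<And>S e. S \<in> sets M \<Longrightarrow> 0 < e \<Longrightarrow> \<exists>n U. cell_saturated n U \<and> measure M (sym_diff S U) < e"
begin

lemma L1_avg_convergent_rect:
  assumes S: "S \<in> sets M" and T: "T \<in> sets M"
  shows "L1_avg_convergent (indicator (S \<times> T))"
proof -
  have "\<exists>N U V. cell_saturated N U \<and> cell_saturated N V \<and>
      measure M (sym_diff S U) < 1 / Suc m \<and> measure M (sym_diff T V) < 1 / Suc m" for m
  proof -
    obtain n1 U where U: "cell_saturated n1 U" "measure M (sym_diff S U) < 1 / Suc m"
      using approx_by_saturated[OF S, of "1 / Suc m"] by auto
    obtain n2 V where V: "cell_saturated n2 V" "measure M (sym_diff T V) < 1 / Suc m"
      using approx_by_saturated[OF T, of "1 / Suc m"] by auto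
    show ?thesis
      by (rule exI[of _ "max n1 n2"], rule exI[of _ U], rule exI[of _ V])
        (use U V cell_saturated_mono in auto)
  qed
  then obtain N U V where UV: "\<And>m. cell_saturated (N m) (U m)" "\<And>m. cell_saturated (N m) (V m)"
    "\<And>m. measure M (sym_diff S (U m)) < 1 / Suc m" "\<And>m. measure M (sym_diff T (V m)) < 1 / Suc m"
    by metis
  have dist: "(\<integral>q. \<bar>indicator (S \<times> T) q - indicator (U m \<times> V m) q :: real\<bar> \<partial>PM) \<le> 2 / Suc m" for m
  proof -
    have "U m \<in> sets M" "V m \<in> sets M" using UV(1,2) by (auto simp: cell_saturated_def)
    then have "(\<integral>q. \<bar>indicator (S \<times> T) q - indicator (U m \<times> V m) q :: real\<bar> \<partial>PM)
        \<le> measure M (sym_diff S (U m)) + measure M (sym_diff T (V m))"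
      by (rule L1_dist_indicator_Times_le[OF S T])
    also have "\<dots> \<le> 1 / Suc m + 1 / Suc m" using UV(3,4)[of m] by linarith
    finally show ?thesis by simp
  qed
  have "(\<lambda>m. 2 / real (Suc m)) \<longlonglongrightarrow> 0"
    using LIMSEQ_Suc[OF lim_const_over_n[of 2]] by simp
  then have "(\<lambda>m. \<integral>q. \<bar>indicator (S \<times> T) q - indicator (U m \<times> V m) q\<bar> \<partial>PM) \<longlonglongrightarrow> (0::real)"
    by (rule real_tendsto_sandwich[OF _ _ tendsto_const, rotated 2]) (use dist in auto)
  then show ?thesis
  proof (rule L1_avg_convergent_approx[rotated 2])
    show "integrable PM (indicator (S \<times> T) :: _ \<Rightarrow> real)" using S T by (simp add: pair_measureI)
    show "L1_avg_convergent (indicator (U m \<times> V m))" for m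
      by (rule L1_avg_convergent_saturated_rect[OF UV(1,2)])
  qed
qed

lemma L1_avg_convergent_space: "L1_avg_convergent (indicator (space M \<times> space M))"
  by (rule L1_avg_convergent_rect) auto

lemma L1_avg_convergent_zero: "L1_avg_convergent (\<lambda>q. 0)"
  using L1_avg_convergent_cmult[OF L1_avg_convergent_space, of 0] by simp

lemma L1_avg_convergent_indicator_Diff:
  assumes "A \<subseteq> space M \<times> space M" "L1_avg_convergent (indicator A)"
  shows "L1_avg_convergent (indicator (space M \<times> space M - A))"
proof -
  have "indicator (space M \<times> space M) q + (-1) * indicator A q = (indicator (space M \<times> space M - A) q :: real)" for q
    using assms(1) by (auto simp: indicator_def)
  with L1_avg_convergent_add[OF L1_avg_convergent_space L1_avg_convergent_cmult[OF assms(2), of "-1"]]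
  show ?thesis by (rule L1_avg_convergent_cong)
qed

lemma L1_avg_convergent_disjoint_UN:
  fixes A :: "nat \<Rightarrow> ('a \<times> 'a) set"
  assumes "disjoint_family A" and [measurable]: "\<And>i. A i \<in> sets PM"
    and conv: "\<And>i. L1_avg_convergent (indicator (A i))"
  shows "L1_avg_convergent (indicator (\<Union>i. A i))"
proof (rule L1_avg_convergent_approx)
  show "L1_avg_convergent (\<lambda>q. \<Sum>i<m. indicator (A i) q)" for m
  proof (induction m)
    case (Suc m)
    then show ?case using L1_avg_convergent_add[OF Suc conv[of m]] by (simp add: add.commute)
  qed (simp add: L1_avg_convergent_zero)
  let ?B = "\<lambda>m. \<Union>i<m. A i"
  have "incseq ?B" by (force simp: incseq_def)
  then have "(\<lambda>m. measure PM (?B m)) \<longlonglongrightarrow> measure PM (\<Union>m. ?B m)"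
    by (intro P.finite_Lim_measure_incseq) auto
  moreover have "(\<Union>m. ?B m) = (\<Union>i. A i)" by auto
  ultimately have "(\<lambda>m. measure PM (\<Union>i. A i) - measure PM (?B m)) \<longlonglongrightarrow> measure PM (\<Union>i. A i) - measure PM (\<Union>i. A i)"
    by (intro tendsto_diff tendsto_const) simp
  moreover have "(\<integral>q. \<bar>indicator (\<Union>i. A i) q - (\<Sum>i<m. indicator (A i) q)\<bar> \<partial>PM)
      = measure PM (\<Union>i. A i) - measure PM (?B m)" for m
  proof -
    have "(\<Sum>i<m. indicator (A i) q) = (indicator (?B m) q :: real)" for q
      using assms(1) by (intro indicator_UN_disjoint[symmetric]) (auto simp: disjoint_family_on_def)
    then have "(\<integral>q. \<bar>indicator (\<Union>i. A i) q - (\<Sum>i<m. indicator (A i) q)\<bar> \<partial>PM)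
        = (\<integral>q. indicator ((\<Union>i. A i) - ?B m) q \<partial>PM :: real)"
      by (intro Bochner_Integration.integral_cong refl) (auto simp: indicator_def)
    also have "\<dots> = measure PM ((\<Union>i. A i) - ?B m)" by simp
    also have "\<dots> = measure PM (\<Union>i. A i) - measure PM (?B m)"
      by (rule P.finite_measure_Diff) auto
    finally show ?thesis .
  qed
  ultimately show "(\<lambda>m. \<integral>q. \<bar>indicator (\<Union>i. A i) q - (\<Sum>i<m. indicator (A i) q) :: real\<bar> \<partial>PM) \<longlonglongrightarrow> 0"
    by simp
qed simp

lemma L1_avg_convergent_indicator:
  assumes "A \<in> sets PM"
  shows "L1_avg_convergent (indicator A)"
proof -
  have "A \<in> sigma_sets (space M \<times> space M) {a \<times> b | a b. a \<in> sets M \<and> b \<in> sets M}"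
    using assms by (simp add: sets_pair_measure)
  then show ?thesis
  proof (induction rule: sigma_sets_induct_disjoint[OF Int_stable_pair_measure_generator pair_measure_closed,
        consumes 1, case_names basic empty compl union])
    case (compl A)
    then have "A \<subseteq> space M \<times> space M"
      by (metis sets.sets_into_space sets_pair_measure space_pair_measure)
    with compl show ?case by (intro L1_avg_convergent_indicator_Diff)
  next
    case (union A)
    then show ?case by (intro L1_avg_convergent_disjoint_UN) (auto simp: sets_pair_measure)
  next
    case (basic A)
    then show ?case by (auto intro: L1_avg_convergent_rect)
  qed (simp add: L1_avg_convergent_zero)
qed

lemma L1_avg_convergent:
  fixes f :: "'a \<times> 'a \<Rightarrow> real"
  assumes "integrable PM f"
  shows "L1_avg_convergent f"
  using assms
proof (induction rule: integrable_induct)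
  case (base A c)
  show ?case
    using L1_avg_convergent_cmult[OF L1_avg_convergent_indicator[OF base(1)], of c]
    by (rule L1_avg_convergent_cong) (simp add: mult.commute)
next
  case (add f g)
  then show ?case using L1_avg_convergent_add by blast
next
  case (lim f s)
  have l5: "integrable PM f" and l2: "\<And>i. L1_avg_convergent (s i)" and l1: "\<And>i. integrable PM (s i)"
    and l3: "\<And>q. q \<in> space PM \<Longrightarrow> (\<lambda>i. s i q) \<longlonglongrightarrow> f q"
    and l4: "\<And>i q. q \<in> space PM \<Longrightarrow> norm (s i q) \<le> 2 * norm (f q)"
    using lim by blast+
  show ?case
  proof (rule L1_avg_convergent_approx[OF l5 l2])
    have [measurable]: "f \<in> borel_measurable PM" "\<And>i. s i \<in> borel_measurable PM" using l5 l1 by auto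
    have "(\<lambda>i. \<integral>q. \<bar>f q - s i q\<bar> \<partial>PM) \<longlonglongrightarrow> (\<integral>q. 0 \<partial>PM)"
    proof (rule integral_dominated_convergence[where w="\<lambda>q. 3 * \<bar>f q\<bar>"])
      show "integrable PM (\<lambda>q. 3 * \<bar>f q\<bar>)" using l5 by auto
      show "AE q in PM. (\<lambda>i. \<bar>f q - s i q\<bar>) \<longlonglongrightarrow> 0"
      proof (rule AE_I2)
        fix q assume "q \<in> space PM"
        then have "(\<lambda>i. s i q) \<longlonglongrightarrow> f q" by (rule l3)
        then have "(\<lambda>i. f q - s i q) \<longlonglongrightarrow> f q - f q" by (intro tendsto_diff tendsto_const)
        then show "(\<lambda>i. \<bar>f q - s i q\<bar>) \<longlonglongrightarrow> 0" using tendsto_rabs by fastforce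
      qed
      show "AE q in PM. norm \<bar>f q - s i q\<bar> \<le> 3 * \<bar>f q\<bar>" for i
      proof (rule AE_I2)
        fix q assume "q \<in> space PM"
        then have "\<bar>s i q\<bar> \<le> 2 * \<bar>f q\<bar>" using l4 by auto
        then show "norm \<bar>f q - s i q\<bar> \<le> 3 * \<bar>f q\<bar>" by simp
      qed
    qed auto
    then show "(\<lambda>i. \<integral>q. \<bar>f q - s i q\<bar> \<partial>PM) \<longlonglongrightarrow> 0" by simp
  qed
qed

lemma cell_avg_AE_convergent_subseq:
  fixes F :: "nat \<Rightarrow> 'a \<times> 'a \<Rightarrow> real"
  assumes F: "\<And>i. integrable PM (F i)"
  shows "\<exists>s. strict_mono s \<and> (AE q in PM. \<forall>i. (\<lambda>m. cell_avg (s m) (F i) q) \<longlonglongrightarrow> F i q)"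
proof -
  define Q where "Q i r \<longleftrightarrow> (AE q in PM. (\<lambda>m. cell_avg (r m) (F i) q) \<longlonglongrightarrow> F i q)" for i and r :: "nat \<Rightarrow> nat"
  have stable: "Q n (s \<circ> r)" if "strict_mono r" "Q n s" for r s n
    using that(2) unfolding Q_def
  proof (elim AE_mp, intro AE_I2 impI)
    fix q assume "(\<lambda>m. cell_avg (s m) (F n) q) \<longlonglongrightarrow> F n q"
    from LIMSEQ_subseq_LIMSEQ[OF this that(1)]
    show "(\<lambda>m. cell_avg ((s \<circ> r) m) (F n) q) \<longlonglongrightarrow> F n q" by (simp add: o_def)
  qed
  interpret subseqs Q
  proof
    fix n and r :: "nat \<Rightarrow> nat" assume r: "strict_mono r"
    have c: "(\<lambda>m. avg_error m (F n)) \<longlonglongrightarrow> 0"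
      using L1_avg_convergent[OF F] by (simp add: L1_avg_convergent_def)
    have "(\<lambda>m. \<integral>q. norm (cell_avg (r m) (F n) q - F n q) \<partial>PM) \<longlonglongrightarrow> 0"
      using LIMSEQ_subseq_LIMSEQ[OF c r] by (simp add: o_def)
    from tendsto_L1_AE_subseq[OF _ this]
    obtain r' where r': "strict_mono r'" "AE q in PM. (\<lambda>m. cell_avg (r (r' m)) (F n) q - F n q) \<longlonglongrightarrow> 0"
      using F integrable_cell_avg by auto
    have "Q n (r \<circ> r')"
      unfolding Q_def using r'(2)
    proof (elim AE_mp, intro AE_I2 impI)
      fix q assume "(\<lambda>m. cell_avg (r (r' m)) (F n) q - F n q) \<longlonglongrightarrow> 0"
      then have "(\<lambda>m. (cell_avg (r (r' m)) (F n) q - F n q) + F n q) \<longlonglongrightarrow> 0 + F n q"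
        by (intro tendsto_add tendsto_const)
      then show "(\<lambda>m. cell_avg ((r \<circ> r') m) (F n) q) \<longlonglongrightarrow> F n q" by simp
    qed
    then show "\<exists>r'. strict_mono r' \<and> Q n (r \<circ> r')" using r' by blast
  qed
  have "Q k diagseq" for k
  proof -
    have "Q k (diagseq \<circ> (+) (Suc k))" by (rule diagseq_holds) (rule stable)
    moreover have "(\<lambda>m. cell_avg ((diagseq \<circ> (+) (Suc k)) m) (F k) q) \<longlonglongrightarrow> F k q
        \<longrightarrow> (\<lambda>m. cell_avg (diagseq m) (F k) q) \<longlonglongrightarrow> F k q" for q
    proof
      assume "(\<lambda>m. cell_avg ((diagseq \<circ> (+) (Suc k)) m) (F k) q) \<longlonglongrightarrow> F k q"
      then have "(\<lambda>m. cell_avg (diagseq (m + Suc k)) (F k) q) \<longlonglongrightarrow> F k q" by (simp add: o_def add.commute)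
      then show "(\<lambda>m. cell_avg (diagseq m) (F k) q) \<longlonglongrightarrow> F k q" by (rule LIMSEQ_offset)
    qed
    ultimately show ?thesis unfolding Q_def by (auto elim: AE_mp)
  qed
  then show ?thesis using subseq_diagseq unfolding Q_def by (auto simp: AE_all_countable)
qed

end

section \<open>The regularised semimetric\<close>

locale regularisation = generating_cell_system M E for M :: "'a measure" and E +
  fixes r :: "'a \<times> 'a \<Rightarrow> real" and H :: "nat \<Rightarrow> 'a set"
  assumes r_measurable[measurable]: "r \<in> borel_measurable PM"
    and r_nonneg: "\<And>q. 0 \<le> r q"
    and r_sym: "AE q in PM. r (snd q, fst q) = r q"
    and r_triangle: "AE x in M. AE y in M. AE z in M. r (x, z) \<le> r (x, y) + r (y, z)"
    and AE_off_diagonal: "AE q in PM. fst q \<noteq> snd q"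
    and sets_H[measurable]: "\<And>i. H i \<in> sets M"
begin

definition trunc :: "nat \<Rightarrow> 'a \<times> 'a \<Rightarrow> real" where
  "trunc k q = min (r q) (real k)"

lemma borel_measurable_trunc[measurable]: "trunc k \<in> borel_measurable PM"
  unfolding trunc_def by measurable

lemma trunc_nonneg: "0 \<le> trunc k q" and trunc_le_nat: "trunc k q \<le> real k" and trunc_le: "trunc k q \<le> r q"
  using r_nonneg[of q] by (auto simp: trunc_def)

lemma trunc_triangle: "AE x in M. AE y in M. AE z in M. trunc k (x, z) \<le> trunc k (x, y) + trunc k (y, z)"
proof -
  have "trunc k (x, z) \<le> trunc k (x, y) + trunc k (y, z)" if "r (x, z) \<le> r (x, y) + r (y, z)" for x y z
    using that r_nonneg[of "(x, y)"] r_nonneg[of "(y, z)"] by (auto simp: trunc_def min_def)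
  with r_triangle show ?thesis by (auto elim!: eventually_mono)
qed

text \<open>The countably many functions whose cell averages are made to converge simultaneously:
  the truncations of \<open>r\<close> at even indices and the indicators of \<open>H i \<times> X\<close> at odd ones.\<close>
definition test_fun :: "nat \<Rightarrow> 'a \<times> 'a \<Rightarrow> real" where
  "test_fun n = (if even n then trunc (n div 2) else indicator (H (n div 2) \<times> space M))"

lemma integrable_test_fun: "integrable PM (test_fun n)"
proof (cases "even n")
  case True
  then show ?thesis unfolding test_fun_def
    by (auto intro!: P.integrable_bounded[where K="real (n div 2)"] simp: trunc_nonneg trunc_le_nat abs_of_nonneg)
next
  case False
  then show ?thesis unfolding test_fun_def
    by (simp add: pair_measureI)
qed

definition scale :: "nat \<Rightarrow> nat" where
  "scale = (SOME s. AE q in PM. \<forall>i. (\<lambda>m. cell_avg (s m) (test_fun i) q) \<longlonglongrightarrow> test_fun i q)"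

lemma AE_cell_avg_scale_tendsto: "AE q in PM. \<forall>i. (\<lambda>m. cell_avg (scale m) (test_fun i) q) \<longlonglongrightarrow> test_fun i q"
proof -
  have "\<exists>s. AE q in PM. \<forall>i. (\<lambda>m. cell_avg (s m) (test_fun i) q) \<longlonglongrightarrow> test_fun i q"
    using cell_avg_AE_convergent_subseq[of test_fun, OF integrable_test_fun] by blast
  then show ?thesis unfolding scale_def by (rule someI_ex)
qed

definition trunc_limsup :: "nat \<Rightarrow> 'a \<times> 'a \<Rightarrow> ereal" where
  "trunc_limsup k q = limsup (\<lambda>m. ereal (cell_avg (scale m) (trunc k) q))"

definition reg :: "'a \<times> 'a \<Rightarrow> ereal" where
  "reg q = (SUP k. trunc_limsup k q)"

definition nondeg :: "'a set" where
  "nondeg = {x \<in> space M. \<forall>n. measure M (cell n x) \<noteq> 0}"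

lemma AE_nondeg: "AE x in M. x \<in> nondeg"
  using AE_cell_measure_nonzero by (auto simp: nondeg_def elim!: eventually_mono)

lemma trunc_limsup_nonneg: "0 \<le> trunc_limsup k q"
proof -
  have "limsup (\<lambda>m. ereal 0) \<le> trunc_limsup k q"
    unfolding trunc_limsup_def
      by (intro Limsup_mono always_eventually allI) (simp add: cell_avg_nonneg trunc_nonneg)
  then show ?thesis by (simp add: Limsup_const zero_ereal_def)
qed

lemma reg_nonneg: "0 \<le> reg q"
  unfolding reg_def using trunc_limsup_nonneg by (meson SUP_upper2 UNIV_I)

lemma trunc_limsup_triangle:
  assumes "x \<in> nondeg" "y \<in> nondeg" "z \<in> nondeg"
  shows "trunc_limsup k (x, z) \<le> trunc_limsup k (x, y) + trunc_limsup k (y, z)"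
proof -
  have "\<And>m. cell_avg (scale m) (trunc k) (x, z)
      \<le> cell_avg (scale m) (trunc k) (x, y) + cell_avg (scale m) (trunc k) (y, z)"
    using assms
      by (intro cell_avg_triangle[OF borel_measurable_trunc trunc_nonneg trunc_le_nat trunc_triangle]) (auto simp: nondeg_def)
  then have "trunc_limsup k (x, z)
      \<le> limsup (\<lambda>m. ereal (cell_avg (scale m) (trunc k) (x, y)) + ereal (cell_avg (scale m) (trunc k) (y, z)))"
    unfolding trunc_limsup_def by (intro Limsup_mono always_eventually allI) simp
  also have "\<dots> \<le> trunc_limsup k (x, y) + trunc_limsup k (y, z)"
    unfolding trunc_limsup_def by (rule ereal_limsup_add_mono)
  finally show ?thesis .
qed

lemma reg_triangle:
  assumes "x \<in> nondeg" "y \<in> nondeg" "z \<in> nondeg"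
  shows "reg (x, z) \<le> reg (x, y) + reg (y, z)"
  unfolding reg_def
proof (rule SUP_least)
  fix k
  have "trunc_limsup k (x, z) \<le> trunc_limsup k (x, y) + trunc_limsup k (y, z)"
    by (rule trunc_limsup_triangle[OF assms])
  also have "\<dots> \<le> (SUP k. trunc_limsup k (x, y)) + (SUP k. trunc_limsup k (y, z))"
    by (intro add_mono SUP_upper) auto
  finally show "trunc_limsup k (x, z) \<le> (SUP k. trunc_limsup k (x, y)) + (SUP k. trunc_limsup k (y, z))" .
qed

lemma AE_reg_eq: "AE q in PM. reg q = ereal (r q)"
  using AE_cell_avg_scale_tendsto
proof (rule eventually_mono)
  fix q assume c: "\<forall>i. (\<lambda>m. cell_avg (scale m) (test_fun i) q) \<longlonglongrightarrow> test_fun i q"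
  have "trunc_limsup k q = ereal (trunc k q)" for k
  proof -
    have "(\<lambda>m. cell_avg (scale m) (test_fun (2 * k)) q) \<longlonglongrightarrow> test_fun (2 * k) q" using c by blast
    then have "(\<lambda>m. ereal (cell_avg (scale m) (trunc k) q)) \<longlonglongrightarrow> ereal (trunc k q)"
      by (simp add: test_fun_def)
    then show ?thesis unfolding trunc_limsup_def by (intro lim_imp_Limsup) auto
  qed
  then have "reg q = (SUP k. ereal (min (r q) (real k)))" by (simp add: reg_def trunc_def)
  also have "\<dots> = ereal (r q)" by (rule SUP_ereal_min_of_nat[OF r_nonneg])
  finally show "reg q = ereal (r q)" .
qed

definition sym_reg :: "'a \<Rightarrow> 'a \<Rightarrow> ereal" where
  "sym_reg x y = max (reg (x, y)) (reg (y, x))"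

lemma sym_reg_commute: "sym_reg x y = sym_reg y x"
  by (simp add: sym_reg_def max.commute)

lemma sym_reg_nonneg: "0 \<le> sym_reg x y"
  by (simp add: sym_reg_def reg_nonneg le_max_iff_disj)

lemma sym_reg_triangle:
  assumes "x \<in> nondeg" "y \<in> nondeg" "z \<in> nondeg"
  shows "sym_reg x z \<le> sym_reg x y + sym_reg y z"
proof -
  have "reg (x, z) \<le> sym_reg x y + sym_reg y z"
    using reg_triangle[OF assms] by (rule order_trans) (intro add_mono, auto simp: sym_reg_def)
  moreover have "reg (z, x) \<le> sym_reg x y + sym_reg y z"
    using reg_triangle[OF assms(3,2,1)]
      by (rule order_trans) (subst add.commute, intro add_mono, auto simp: sym_reg_def)
  ultimately show ?thesis by (simp add: sym_reg_def)
qed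

lemma AE_sym_reg_eq: "AE q in PM. sym_reg (fst q) (snd q) = ereal (r q)"
  using AE_reg_eq P.AE_pair_swap[OF AE_reg_eq] r_sym
proof eventually_elim
  case (elim q)
  then show ?case by (cases q) (simp add: sym_reg_def)
qed

definition cell_density :: "nat \<Rightarrow> 'a set \<Rightarrow> 'a \<Rightarrow> real" where
  "cell_density n A x = measure M (cell n x \<inter> A) / measure M (cell n x)"

lemma cell_avg_indicator_Times_space:
  assumes A: "A \<in> sets M" and y: "measure M (cell n y) \<noteq> 0"
  shows "cell_avg n (indicator (A \<times> space M)) (x, y) = cell_density n A x"
proof -
  let ?C = "cell n x" and ?D = "cell n y"
  have "(\<integral>q. indicator (?C \<times> ?D) q * indicator (A \<times> space M) q \<partial>PM) = measure PM ((?C \<inter> A) \<times> ?D)"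
  proof -
    have "(?C \<times> ?D) \<inter> (A \<times> space M) = (?C \<inter> A) \<times> ?D" using cell_subset_space[of n y] by auto
    moreover have "(?C \<inter> A) \<times> ?D \<inter> space PM = (?C \<inter> A) \<times> ?D"
      using cell_subset_space[of n x] cell_subset_space[of n y] by (auto simp: space_pair_measure)
    ultimately show ?thesis by (simp add: indicator_inter_arith[symmetric])
  qed
  also have "\<dots> = measure M (?C \<inter> A) * measure M ?D" using A by (simp add: measure_PM_Times)
  finally show ?thesis using y by (simp add: cell_avg_def' cell_density_def)
qed

lemma AE_cell_density_tendsto:
  "AE x in M. x \<in> nondeg \<and> (\<forall>i. x \<in> H i \<longrightarrow> (\<lambda>m. cell_density (scale m) (H i) x) \<longlonglongrightarrow> 1)"
proof -
  have "AE x in M. AE y in M. \<forall>i. (\<lambda>m. cell_avg (scale m) (test_fun i) (x, y)) \<longlonglongrightarrow> test_fun i (x, y)"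
    using P.AE_pair[OF AE_cell_avg_scale_tendsto] by simp
  then show ?thesis
    using AE_nondeg
  proof eventually_elim
    case (elim x)
    have ae: "AE y in M. y \<in> nondeg \<and> (\<forall>i. (\<lambda>m. cell_avg (scale m) (test_fun i) (x, y)) \<longlonglongrightarrow> test_fun i (x, y))"
      using elim(1) AE_nondeg by eventually_elim auto
    then obtain y where y: "y \<in> nondeg" "\<And>i. (\<lambda>m. cell_avg (scale m) (test_fun i) (x, y)) \<longlonglongrightarrow> test_fun i (x, y)"
      by (rule AE_obtain_point) blast
    have "(\<lambda>m. cell_density (scale m) (H i) x) \<longlonglongrightarrow> 1" if "x \<in> H i" for i
    proof -
      have "(\<lambda>m. cell_avg (scale m) (test_fun (Suc (2 * i))) (x, y)) \<longlonglongrightarrow> test_fun (Suc (2 * i)) (x, y)"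
        by (rule y(2))
      moreover have "test_fun (Suc (2 * i)) = indicator (H i \<times> space M)" by (simp add: test_fun_def)
      moreover have "cell_avg (scale m) (indicator (H i \<times> space M)) (x, y) = cell_density (scale m) (H i) x" for m
        using y(1) by (intro cell_avg_indicator_Times_space) (auto simp: nondeg_def)
      ultimately show ?thesis using that y(1) by (simp add: nondeg_def indicator_def)
    qed
    then show ?case using elim(2) by auto
  qed
qed

lemma AE_trunc_le_indicators:
  assumes "0 \<le> e" and AE_le: "AE q in PM. fst q \<in> A \<longrightarrow> snd q \<in> A \<longrightarrow> r q \<le> e"
  shows "AE q in PM. indicator (C \<times> D) q * trunc k q
    \<le> e * indicator (C \<times> D) q + real k * indicator ((C - A) \<times> D) q + real k * indicator (C \<times> (D - A)) q"
  using AE_le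
proof eventually_elim
  case (elim q)
  have "trunc k q \<le> e" if "fst q \<in> A" "snd q \<in> A" using elim that trunc_le[of k q] by auto
  then show ?case
    using \<open>0 \<le> e\<close> trunc_le_nat[of k q] trunc_nonneg[of k q] by (cases q) (auto simp: indicator_def)
qed

text \<open>Outside \<open>A \<times> A\<close> the truncation \<open>trunc k\<close> is only bounded by \<open>k\<close>, so the bound is useful when the
  cells of \<open>x\<close> and \<open>y\<close> lie mostly inside \<open>A\<close>.\<close>
lemma cell_avg_trunc_le:
  assumes [measurable]: "A \<in> sets M" and "0 \<le> e"
    and AE_le: "AE q in PM. fst q \<in> A \<longrightarrow> snd q \<in> A \<longrightarrow> r q \<le> e"
    and "measure M (cell n x) \<noteq> 0" "measure M (cell n y) \<noteq> 0"
  shows "cell_avg n (trunc k) (x, y)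
    \<le> e + real k * (1 - cell_density n A x) + real k * (1 - cell_density n A y)"
proof -
  let ?C = "cell n x" and ?D = "cell n y"
  have pos: "0 < measure M ?C" "0 < measure M ?D" "0 < measure M ?C * measure M ?D"
    using assms(4,5) by (auto simp: zero_less_measure_iff)
  have "(\<integral>q. indicator (?C \<times> ?D) q * trunc k q \<partial>PM)
      \<le> (\<integral>q. e * indicator (?C \<times> ?D) q + real k * indicator ((?C - A) \<times> ?D) q
          + real k * indicator (?C \<times> (?D - A)) q \<partial>PM)"
    by (intro integral_mono_AE AE_trunc_le_indicators[OF \<open>0 \<le> e\<close> AE_le] integrable_indicator_mult
        integrable_test_fun[of "2 * k", unfolded test_fun_def, simplified] Bochner_Integration.integrable_add
        integrable_mult_right integrable_indicator_finite) auto
  also have "\<dots> = e * (measure M ?C * measure M ?D) + real k * (measure M (?C - A) * measure M ?D)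
      + real k * (measure M ?C * measure M (?D - A))"
    by (simp add: measure_PM_Times pair_measureI)
  also have "\<dots> = (e + real k * (1 - cell_density n A x) + real k * (1 - cell_density n A y))
      * (measure M ?C * measure M ?D)"
    using pos by (simp add: finite_measure_Diff' cell_density_def field_simps)
  finally show ?thesis
    using pos by (simp add: cell_avg_def' pos_divide_le_eq)
qed

lemma reg_le_of_AE_le:
  assumes A[measurable]: "A \<in> sets M" and e: "0 \<le> e"
    and AEb: "AE q in PM. fst q \<in> A \<longrightarrow> snd q \<in> A \<longrightarrow> r q \<le> e"
    and x: "x \<in> nondeg" and y: "y \<in> nondeg"
    and dx: "(\<lambda>m. cell_density (scale m) A x) \<longlonglongrightarrow> 1" and dy: "(\<lambda>m. cell_density (scale m) A y) \<longlonglongrightarrow> 1"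
  shows "reg (x, y) \<le> ereal e"
  unfolding reg_def
proof (rule SUP_least)
  fix k
  let ?b = "\<lambda>m. e + real k * (1 - cell_density (scale m) A x) + real k * (1 - cell_density (scale m) A y)"
  have lb: "?b \<longlonglongrightarrow> e + real k * (1 - 1) + real k * (1 - 1)"
    by (intro tendsto_intros dx dy)
  have "trunc_limsup k (x, y) \<le> limsup (\<lambda>m. ereal (?b m))"
    unfolding trunc_limsup_def using x y
    by (intro Limsup_mono always_eventually allI) (auto intro!: cell_avg_trunc_le[OF A e AEb] simp: nondeg_def)
  also have "\<dots> = ereal e"
    using lb by (intro lim_imp_Limsup) auto
  finally show "trunc_limsup k (x, y) \<le> ereal e" .
qed

definition density_points :: "'a set" where
  "density_points = {x \<in> nondeg. \<forall>i. x \<in> H i \<longrightarrow> (\<lambda>m. cell_density (scale m) (H i) x) \<longlonglongrightarrow> 1}"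

lemma AE_density_points: "AE x in M. x \<in> density_points"
  using AE_cell_density_tendsto by (simp add: density_points_def)

lemma sym_reg_le_of_AE_le:
  assumes "0 \<le> e" and bound: "AE q in PM. fst q \<in> H i \<longrightarrow> snd q \<in> H i \<longrightarrow> r q \<le> e"
    and "x \<in> density_points" "y \<in> density_points" "x \<in> H i" "y \<in> H i"
  shows "sym_reg x y \<le> ereal e"
  using assms reg_le_of_AE_le[OF sets_H \<open>0 \<le> e\<close> bound]
  by (simp add: sym_reg_def density_points_def)

lemma obtain_finite_core:
  obtains G where "G \<subseteq> density_points" "G \<noteq> {}" "AE x in M. x \<in> G"
    "\<And>x y. x \<in> G \<Longrightarrow> y \<in> G \<Longrightarrow> sym_reg x y < \<infinity>"
proof -
  have "AE x in M. AE y in M. sym_reg x y < \<infinity>"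
    using P.AE_pair[OF AE_sym_reg_eq] by (auto elim!: eventually_mono)
  with AE_density_points have "AE x in M. x \<in> density_points \<and> (AE y in M. sym_reg x y < \<infinity>)"
    by eventually_elim auto
  then obtain x\<^sub>0 where x\<^sub>0: "x\<^sub>0 \<in> density_points" "AE y in M. sym_reg x\<^sub>0 y < \<infinity>"
    by (rule AE_obtain_point) blast
  define G where "G = {y \<in> density_points. sym_reg x\<^sub>0 y < \<infinity>}"
  have AE_G: "AE y in M. y \<in> G"
    using x\<^sub>0(2) AE_density_points by eventually_elim (simp add: G_def)
  then have "G \<noteq> {}" by (metis AE_obtain_point empty_iff)
  have nondeg: "x\<^sub>0 \<in> nondeg" "\<And>x. x \<in> G \<Longrightarrow> x \<in> nondeg"
    using x\<^sub>0 by (auto simp: G_def density_points_def)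
  have "sym_reg x y < \<infinity>" if "x \<in> G" "y \<in> G" for x y
  proof -
    have "sym_reg x y \<le> sym_reg x x\<^sub>0 + sym_reg x\<^sub>0 y"
      using that nondeg by (intro sym_reg_triangle) auto
    also have "\<dots> < \<infinity>"
      using that by (simp add: G_def sym_reg_commute[of x])
    finally show ?thesis .
  qed
  then show ?thesis using that[of G] \<open>G \<noteq> {}\<close> AE_G by (auto simp: G_def)
qed

lemma obtain_semimetric_AE_eq:
  obtains \<rho>' G where "semimetric_on (space M) \<rho>'" "AE q in PM. \<rho>' (fst q) (snd q) = r q"
    "G \<subseteq> space M" "\<And>x. \<exists>x'\<in>G. \<rho>' x x' = 0"
    "\<And>i e x y. 0 \<le> e \<Longrightarrow> (AE q in PM. fst q \<in> H i \<longrightarrow> snd q \<in> H i \<longrightarrow> r q \<le> e) \<Longrightarrow>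
       x \<in> G \<Longrightarrow> y \<in> G \<Longrightarrow> x \<in> H i \<Longrightarrow> y \<in> H i \<Longrightarrow> \<rho>' x y \<le> e"
proof -
  obtain G where G: "G \<subseteq> density_points" "G \<noteq> {}" "AE x in M. x \<in> G"
    and finite: "\<And>x y. x \<in> G \<Longrightarrow> y \<in> G \<Longrightarrow> sym_reg x y < \<infinity>"
    by (erule obtain_finite_core)
  obtain x\<^sub>0 where x\<^sub>0: "x\<^sub>0 \<in> G" using G(2) by blast
  have G_nondeg: "x \<in> G \<Longrightarrow> x \<in> nondeg" for x using G(1) by (auto simp: density_points_def)
  let ?\<rho> = "collapse G x\<^sub>0 sym_reg"
  have "semimetric_on (space M) ?\<rho>"
    using x\<^sub>0
      by (intro semimetric_on_collapse sym_reg_nonneg sym_reg_commute sym_reg_triangle finite G_nondeg)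
  moreover have "AE q in PM. ?\<rho> (fst q) (snd q) = r q"
    using P.AE_pair_fstI[OF G(3)] P.AE_pair_sndI[OF G(3)] AE_off_diagonal AE_sym_reg_eq
    by eventually_elim (simp add: collapse_eq)
  moreover have "G \<subseteq> space M" using G(1) by (auto simp: density_points_def nondeg_def)
  moreover have "\<exists>x'\<in>G. ?\<rho> x x' = 0" for x
    using collapse_retract_eq_0[OF x\<^sub>0] retract_in[OF x\<^sub>0] by blast
  moreover have "?\<rho> x y \<le> e"
    if "0 \<le> e" "AE q in PM. fst q \<in> H i \<longrightarrow> snd q \<in> H i \<longrightarrow> r q \<le> e"
      "x \<in> G" "y \<in> G" "x \<in> H i" "y \<in> H i" for i e x y
    using that G(1) by (intro collapse_le sym_reg_le_of_AE_le) auto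
  ultimately show ?thesis by (rule that)
qed

end

section \<open>Lebesgue spaces\<close>

lemma borel_prob_approx_by_basis_union:
  fixes \<nu> :: "real measure" and Bb :: "nat \<Rightarrow> real set"
  assumes nu: "prob_space \<nu>" and snu: "sets \<nu> = sets borel"
    and Bo: "\<And>i. open (Bb i)" and Bbase: "\<And>S. open S \<Longrightarrow> \<exists>k. S = \<Union>{Bb n |n. n \<in> k}"
    and X: "X \<in> sets (completion \<nu>)" and e: "0 < e"
  shows "\<exists>k n. measure (completion \<nu>) (sym_diff X (\<Union>i\<in>{i\<in>k. i < n}. Bb i)) < e"
proof -
  interpret nu: prob_space \<nu> by (rule nu)
  interpret cnu: finite_measure "completion \<nu>"
    by (rule finite_measureI) (simp add: nu.emeasure_space_1)
  have Bs: "\<And>i. Bb i \<in> sets \<nu>" using Bo snu by auto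
  obtain T N0 N' where XT: "X = T \<union> N0" "N0 \<subseteq> N'" "N' \<in> null_sets \<nu>" "T \<in> sets \<nu>"
    using X by (rule sets_completionE)
  have Tb: "T \<in> sets borel" using XT(4) snu by simp
  have "emeasure \<nu> T = (INF U \<in> {U. T \<subseteq> U \<and> open U}. emeasure \<nu> U)"
    by (rule outer_regular[OF snu _ Tb]) (simp add: nu.emeasure_space_1)
  moreover have "emeasure \<nu> T < emeasure \<nu> T + ennreal (e/2)"
    using e by (simp add: nu.emeasure_eq_measure ennreal_plus[symmetric] ennreal_less_iff del: ennreal_plus)
  ultimately obtain U where U: "T \<subseteq> U" "open U" "emeasure \<nu> U < emeasure \<nu> T + ennreal (e/2)"
    by (metis (no_types, lifting) INF_less_iff mem_Collect_eq)
  have Us: "U \<in> sets \<nu>" using U(2) snu by auto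
  have mU: "measure \<nu> U < measure \<nu> T + e/2"
    using U(3) e
      by (simp add: nu.emeasure_eq_measure ennreal_plus[symmetric] ennreal_less_iff del: ennreal_plus)
  obtain k where k: "U = \<Union>{Bb n |n. n \<in> k}" using Bbase[OF U(2)] by blast
  define Op where "Op n = (\<Union>i\<in>{i\<in>k. i < n}. Bb i)" for n
  have Os: "Op n \<in> sets \<nu>" for n unfolding Op_def using Bs by auto
  have Oinc: "incseq Op" unfolding Op_def incseq_def by force
  have OU: "(\<Union>n. Op n) = U" unfolding Op_def k by force
  have "(\<lambda>n. measure \<nu> (Op n)) \<longlonglongrightarrow> measure \<nu> (\<Union>n. Op n)"
    using Os Oinc by (intro nu.finite_Lim_measure_incseq) auto
  then have "(\<lambda>n. measure \<nu> (Op n)) \<longlonglongrightarrow> measure \<nu> U" using OU by simp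
  from LIMSEQ_D[OF this, of "e/2"] e obtain n where n: "\<bar>measure \<nu> (Op n) - measure \<nu> U\<bar> < e/2"
    by auto
  have OnU: "Op n \<subseteq> U" using OU by auto
  have sub: "sym_diff X (Op n) \<subseteq> N' \<union> (U - T) \<union> (U - Op n)"
    using XT(1,2) U(1) OnU by auto
  have N'n: "N' \<in> sets \<nu>" "measure \<nu> N' = 0"
    using XT(3) by (auto simp: null_sets_def nu.emeasure_eq_measure)
  have "measure (completion \<nu>) (sym_diff X (Op n)) \<le> measure (completion \<nu>) (N' \<union> (U - T) \<union> (U - Op n))"
    using N'n Us XT(4) Os by (intro cnu.finite_measure_mono sub) auto
  also have "\<dots> = measure \<nu> (N' \<union> (U - T) \<union> (U - Op n))"
    using N'n Us XT(4) Os by (intro measure_completion) auto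
  also have "\<dots> \<le> measure \<nu> N' + measure \<nu> (U - T) + measure \<nu> (U - Op n)"
    using N'n Us XT(4) Os
    by (intro order_trans[OF measure_Un_le] add_mono measure_Un_le order_refl) auto
  also have "\<dots> = measure \<nu> U - measure \<nu> T + (measure \<nu> U - measure \<nu> (Op n))"
    using N'n Us XT(4) Os U(1) OnU by (simp add: nu.finite_measure_Diff)
  also have "\<dots> < e" using mU n by linarith
  finally show ?thesis unfolding Op_def by blast
qed

locale iso_mod0_witness =
  fixes M :: "'a measure" and N :: "'b measure" and A B and f :: "'a \<Rightarrow> 'b"
  assumes sets_A: "A \<in> sets M" and null_A: "space M - A \<in> null_sets M"
    and sets_B: "B \<in> sets N" and bij: "bij_betw f A B"
    and sets_image: "\<And>S. S \<subseteq> A \<Longrightarrow> S \<in> sets M \<longleftrightarrow> f ` S \<in> sets N"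
    and emeasure_image: "\<And>S. S \<in> sets M \<Longrightarrow> S \<subseteq> A \<Longrightarrow> emeasure N (f ` S) = emeasure M S"
begin

lemma sets_preimage: "Y \<in> sets N \<Longrightarrow> {x \<in> A. f x \<in> Y} \<in> sets M"
proof -
  assume "Y \<in> sets N"
  moreover have "f ` {x \<in> A. f x \<in> Y} = B \<inter> Y" using bij by (auto simp: bij_betw_def)
  ultimately show ?thesis using sets_image[of "{x \<in> A. f x \<in> Y}"] sets_B by auto
qed

lemma measure_sym_diff_preimage_le:
  assumes "finite_measure N" "S \<in> sets M" "S \<subseteq> A" "Y \<in> sets N"
  shows "measure M (sym_diff S {x \<in> A. f x \<in> Y}) \<le> measure N (sym_diff (f ` S) Y)"
proof -
  interpret N: finite_measure N by (rule assms(1))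
  let ?U = "{x \<in> A. f x \<in> Y}"
  have inj: "inj_on f A" using bij by (rule bij_betw_imp_inj_on)
  have sets: "sym_diff S ?U \<in> sets M" "sym_diff S ?U \<subseteq> A"
    using assms sets_preimage by auto
  have "f ` sym_diff S ?U \<subseteq> sym_diff (f ` S) Y"
    using \<open>S \<subseteq> A\<close> by (auto dest: inj_onD[OF inj])
  moreover have "f ` S \<in> sets N" using assms sets_image by blast
  ultimately have "measure N (f ` sym_diff S ?U) \<le> measure N (sym_diff (f ` S) Y)"
    using sets sets_image assms(4) by (intro N.finite_measure_mono) auto
  then show ?thesis using emeasure_image[OF sets] by (simp add: measure_def)
qed

end

lemma iso_mod0_witnessI:
  assumes "iso_mod0 M N"
  obtains A B f where "iso_mod0_witness M N A B f"
  using assms unfolding iso_mod0_def iso_mod0_witness_def by blast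


lemma lebesgue_space_generating_cell_system:
  assumes "lebesgue_space M"
  obtains E A where "generating_cell_system M E" "A \<in> sets M" "space M - A \<in> null_sets M"
    "\<And>x y. x \<in> A \<Longrightarrow> y \<in> A \<Longrightarrow> x \<noteq> y \<Longrightarrow> \<exists>i. (x \<in> E i) \<noteq> (y \<in> E i)"
proof -
  obtain \<nu> :: "real measure" where M: "prob_space M" and \<nu>: "prob_space \<nu>" "sets \<nu> = sets borel"
    and iso: "iso_mod0 M (completion \<nu>)"
    using assms unfolding lebesgue_space_def by blast
  obtain A B f where "iso_mod0_witness M (completion \<nu>) A B f"
    using iso by (rule iso_mod0_witnessI)
  interpret W: iso_mod0_witness M "completion \<nu>" A B f by fact
  interpret M: prob_space M by (rule M)
  interpret \<nu>: prob_space \<nu> by (rule \<nu>(1))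
  have fin: "finite_measure (completion \<nu>)"
    by (rule finite_measureI) (simp add: \<nu>.emeasure_space_1)
  obtain Bb :: "nat \<Rightarrow> real set" where Bb: "\<And>n. open (Bb n)"
    and base: "\<And>S. open S \<Longrightarrow> \<exists>k. S = \<Union>{Bb n |n. n \<in> k}"
    by (rule univ_second_countable_sequence) blast
  have open_sets: "open Y \<Longrightarrow> Y \<in> sets (completion \<nu>)" for Y using \<nu>(2) by auto
  define E where "E i = {x \<in> A. f x \<in> Bb i}" for i
  have sets_E: "E i \<in> sets M" for i unfolding E_def by (intro W.sets_preimage open_sets Bb)
  interpret cell_system M E by unfold_locales (rule sets_E)
  have "\<exists>n U. cell_saturated n U \<and> measure M (sym_diff S U) < e" if S: "S \<in> sets M" and "0 < e" for S e
  proof -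
    have "f ` (S \<inter> A) \<in> sets (completion \<nu>)" using S W.sets_A W.sets_image by blast
    with borel_prob_approx_by_basis_union[OF \<nu> Bb base _ \<open>0 < e\<close>] obtain k n
      where approx: "measure (completion \<nu>) (sym_diff (f ` (S \<inter> A)) (\<Union>i\<in>{i\<in>k. i < n}. Bb i)) < e"
      by blast
    define U where "U = (\<Union>i\<in>{i\<in>k. i < n}. E i)"
    have U: "U = {x \<in> A. f x \<in> (\<Union>i\<in>{i\<in>k. i < n}. Bb i)}" by (auto simp: U_def E_def)
    have "measure M (sym_diff (S \<inter> A) U) < e"
      unfolding U using S W.sets_A Bb approx
      by (intro le_less_trans[OF W.measure_sym_diff_preimage_le[OF fin]] open_sets) auto
    moreover have "measure M (sym_diff S U) \<le> measure M (sym_diff (S \<inter> A) U) + measure M (space M - A)"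
      using S W.sets_A sets.sets_into_space[OF S] cell_saturated_UN_E[of "{i\<in>k. i < n}" n]
      by (intro order_trans[OF M.finite_measure_mono measure_Un_le]) (auto simp: U_def cell_saturated_def)
    moreover have "measure M (space M - A) = 0"
      using W.null_A by (simp add: M.emeasure_eq_measure null_sets_def)
    ultimately show ?thesis using cell_saturated_UN_E[of "{i\<in>k. i < n}" n] unfolding U_def by force
  qed
  then have "generating_cell_system M E" by unfold_locales
  moreover have "\<exists>i. (x \<in> E i) \<noteq> (y \<in> E i)" if "x \<in> A" "y \<in> A" "x \<noteq> y" for x y
  proof -
    have "f x \<noteq> f y" using W.bij that by (auto simp: bij_betw_def dest: inj_onD)
    moreover obtain k where "- {f y} = \<Union>{Bb n |n. n \<in> k}" using base[of "- {f y}"] by auto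
    ultimately obtain i where "f x \<in> Bb i" "f y \<notin> Bb i" by blast
    then show ?thesis using that by (auto simp: E_def)
  qed
  ultimately show ?thesis using that W.sets_A W.null_A by blast
qed

lemma (in prob_space) AE_neq_of_separating:
  fixes E :: "nat \<Rightarrow> 'a set"
  assumes cont: "continuous_measure M" and E[measurable]: "\<And>i. E i \<in> sets M"
    and A: "A \<in> sets M" "space M - A \<in> null_sets M"
    and sep: "\<And>x y. x \<in> A \<Longrightarrow> y \<in> A \<Longrightarrow> x \<noteq> y \<Longrightarrow> \<exists>i. (x \<in> E i) \<noteq> (y \<in> E i)"
  shows "AE q in M \<Otimes>\<^sub>M M. fst q \<noteq> snd q"
proof -
  interpret P: pair_prob_space M M ..
  define Dg where "Dg = {q \<in> space (M \<Otimes>\<^sub>M M). \<forall>i. (fst q \<in> E i \<longleftrightarrow> snd q \<in> E i)}"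
  have "Dg = space (M \<Otimes>\<^sub>M M) \<inter> (\<Inter>i. (E i \<times> E i) \<union> ((space M - E i) \<times> (space M - E i)))"
    by (auto simp: Dg_def space_pair_measure)
  also have "\<dots> \<in> sets (M \<Otimes>\<^sub>M M)"
    by (intro sets.Int sets.top sets.countable_INT' sets.Un pair_measureI sets.Diff E) auto
  finally have Dg[measurable]: "Dg \<in> sets (M \<Otimes>\<^sub>M M)" .
  have "Pair x -` Dg \<in> null_sets M" if x: "x \<in> A" for x
  proof -
    have "Pair x -` Dg \<subseteq> {x} \<union> (space M - A)"
      using sep[OF x] by (auto simp: Dg_def space_pair_measure)
    moreover have "{x} \<union> (space M - A) \<in> null_sets M"
      using cont x A sets.sets_into_space by (intro null_sets.Un) (auto simp: continuous_measure_def)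
    ultimately show ?thesis by (metis null_sets_subset sets_Pair1 Dg)
  qed
  moreover have "AE x in M. x \<in> A" using A(2) by (rule AE_I') auto
  ultimately have "emeasure (M \<Otimes>\<^sub>M M) Dg = (\<integral>\<^sup>+x. 0 \<partial>M)"
    unfolding emeasure_pair_measure_alt[OF Dg]
    by (intro nn_integral_cong_AE) (auto elim!: eventually_mono)
  then have "AE q in M \<Otimes>\<^sub>M M. q \<notin> Dg" by (intro AE_not_in) (simp add: null_sets_def)
  then show ?thesis using AE_space by eventually_elim (auto simp: Dg_def)
qed

lemma (in prob_space) almost_metric_measurable_version:
  assumes "almost_metric M \<rho>"
  obtains r where "r \<in> borel_measurable (M \<Otimes>\<^sub>M M)" "\<And>q. 0 \<le> r q"
    "AE q in M \<Otimes>\<^sub>M M. r q = \<rho> (fst q) (snd q)"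
    "AE q in M \<Otimes>\<^sub>M M. r (snd q, fst q) = r q"
    "AE x in M. AE y in M. AE z in M. r (x, z) \<le> r (x, y) + r (y, z)"
proof -
  interpret P: pair_prob_space M M ..
  interpret P3: pair_prob_space M "M \<Otimes>\<^sub>M M" ..
  have meas: "(\<lambda>(x, y). \<rho> x y) \<in> borel_measurable (completion (M \<Otimes>\<^sub>M M))"
    and nonneg: "\<And>x y. x \<in> space M \<Longrightarrow> y \<in> space M \<Longrightarrow> 0 \<le> \<rho> x y"
    and sym: "AE p in M \<Otimes>\<^sub>M M. \<rho> (fst p) (snd p) = \<rho> (snd p) (fst p)"
    and tri: "AE t in M \<Otimes>\<^sub>M (M \<Otimes>\<^sub>M M).
      \<rho> (fst t) (snd (snd t)) \<le> \<rho> (fst t) (fst (snd t)) + \<rho> (fst (snd t)) (snd (snd t))"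
    using assms unfolding almost_metric_def by blast+
  obtain g where [measurable]: "g \<in> borel_measurable (M \<Otimes>\<^sub>M M)"
    and g: "AE q in M \<Otimes>\<^sub>M M. (\<lambda>(x, y). \<rho> x y) q = g q"
    using completion_ex_borel_measurable_real[OF meas] by blast
  define r where "r q = max 0 (g q)" for q
  have "r \<in> borel_measurable (M \<Otimes>\<^sub>M M)" unfolding r_def by measurable
  moreover have eq: "AE q in M \<Otimes>\<^sub>M M. r q = \<rho> (fst q) (snd q)"
    using g AE_space
  proof eventually_elim
    case (elim q)
    then have "0 \<le> \<rho> (fst q) (snd q)" by (intro nonneg) (auto simp: space_pair_measure)
    with elim show ?case by (cases q) (simp add: r_def)
  qed
  moreover have "AE q in M \<Otimes>\<^sub>M M. r (snd q, fst q) = r q"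
    using P.AE_pair_swap[OF eq] eq sym by eventually_elim simp
  moreover have "AE x in M. AE y in M. AE z in M. r (x, z) \<le> r (x, y) + r (y, z)"
  proof -
    have tri': "AE x in M. AE y in M. AE z in M. \<rho> x z \<le> \<rho> x y + \<rho> y z"
      using P3.AE_pair[OF tri] by (auto elim!: eventually_mono dest!: P.AE_pair)
    have eq': "AE x in M. AE y in M. r (x, y) = \<rho> x y"
      using P.AE_pair[OF eq] by simp
    show ?thesis
      using tri' eq'
    proof eventually_elim
      case (elim x)
      from elim(1,2) eq' show ?case
      proof eventually_elim
        case (elim y)
        from elim(1,3) \<open>AE z in M. r (x, z) = \<rho> x z\<close> show ?case
          by eventually_elim (use elim(2) in simp)
      qed
    qed
  qed
  ultimately show ?thesis using that by (auto simp: r_def)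
qed

lemma AE_le_of_ess_diam_less:
  assumes "ess_diam M \<rho> B < ereal e"
  shows "AE q in M \<Otimes>\<^sub>M M. fst q \<in> B \<longrightarrow> snd q \<in> B \<longrightarrow> \<rho> (fst q) (snd q) \<le> e"
proof -
  let ?f = "\<lambda>(x, y). if x \<in> B \<and> y \<in> B then ereal (\<rho> x y) else - \<infinity>"
  have le: "x \<le> e" if "ereal x \<le> ess_diam M \<rho> B" for x
    using order.strict_trans1[OF that assms] by simp
  have "AE q in completion (M \<Otimes>\<^sub>M M). ?f q \<le> ess_diam M \<rho> B"
    unfolding ess_diam_def by (rule esssup_AE)
  then show ?thesis
    unfolding AE_completion_iff by eventually_elim (auto intro: le)
qed

lemma essentially_separable_countable_cover:
  assumes "essentially_separable M \<rho>" "space M \<noteq> {}"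
  obtains \<C> where "countable \<C>" "\<C> \<noteq> {}" "\<C> \<subseteq> sets M"
    "\<And>e x. 0 < e \<Longrightarrow> x \<in> space M \<Longrightarrow> \<exists>C\<in>\<C>. x \<in> C \<and> ess_diam M \<rho> C < ereal e"
proof -
  have "\<forall>j::nat. \<exists>\<A>. countable \<A> \<and> \<A> \<subseteq> sets M \<and> space M \<subseteq> \<Union>\<A> \<and>
      (\<forall>A\<in>\<A>. ess_diam M \<rho> A < ereal (1 / Suc j))"
    using assms(1) unfolding essentially_separable_def by simp
  then obtain \<A> where \<A>: "\<And>j. countable (\<A> j)" "\<And>j. \<A> j \<subseteq> sets M" "\<And>j. space M \<subseteq> \<Union>(\<A> j)"
    "\<And>j A. A \<in> \<A> j \<Longrightarrow> ess_diam M \<rho> A < ereal (1 / Suc j)"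
    by metis
  have "countable (\<Union>j. \<A> j)" using \<A>(1) by (intro countable_UN) auto
  moreover have "(\<Union>j. \<A> j) \<noteq> {}" using \<A>(3)[of 0] assms(2) by auto
  moreover have "(\<Union>j. \<A> j) \<subseteq> sets M" using \<A>(2) by auto
  moreover have "\<exists>C\<in>(\<Union>j. \<A> j). x \<in> C \<and> ess_diam M \<rho> C < ereal e" if "0 < e" "x \<in> space M" for e x
  proof -
    obtain j :: nat where "1 / Suc j < e" using \<open>0 < e\<close> by (metis nat_approx_posE of_nat_Suc)
    moreover obtain C where "C \<in> \<A> j" "x \<in> C" using \<A>(3) \<open>x \<in> space M\<close> by blast
    ultimately show ?thesis
      using order.strict_trans[OF \<A>(4)[OF \<open>C \<in> \<A> j\<close>], of "ereal e"] by auto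
  qed
  ultimately show ?thesis by (rule that)
qed

lemma separable_onI_cover:
  fixes d :: "'a \<Rightarrow> 'a \<Rightarrow> real"
  assumes d: "semimetric_on X d" and "G \<subseteq> X" and retract: "\<And>x. x \<in> X \<Longrightarrow> \<exists>x'\<in>G. d x x' = 0"
    and "countable \<C>"
    and cover: "\<And>e x. 0 < e \<Longrightarrow> x \<in> G \<Longrightarrow> \<exists>C\<in>\<C>. x \<in> C \<and> (\<forall>y\<in>G \<inter> C. \<forall>z\<in>G \<inter> C. d y z \<le> e)"
  shows "separable_on X d"
proof -
  define c where "c C = (SOME y. y \<in> G \<inter> C)" for C
  have c: "c C \<in> G \<inter> C" if "G \<inter> C \<noteq> {}" for C
    using that unfolding c_def by (metis ex_in_conv someI_ex)
  have "\<exists>y\<in>c ` {C \<in> \<C>. G \<inter> C \<noteq> {}}. d x y < e" if x: "x \<in> X" and "0 < e" for x e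
  proof -
    obtain x' where x': "x' \<in> G" "d x x' = 0" using retract[OF x] by blast
    obtain C where C: "C \<in> \<C>" "x' \<in> C" "\<forall>y\<in>G \<inter> C. \<forall>z\<in>G \<inter> C. d y z \<le> e / 2"
      using cover[of "e / 2" x'] \<open>0 < e\<close> x' by auto
    have "G \<inter> C \<noteq> {}" using x' C by auto
    have "d x (c C) \<le> d x x' + d x' (c C)"
      using d x x' \<open>G \<subseteq> X\<close> c[OF \<open>G \<inter> C \<noteq> {}\<close>] unfolding semimetric_on_def by blast
    also have "\<dots> \<le> e / 2" using x' C c[OF \<open>G \<inter> C \<noteq> {}\<close>] by simp
    also have "\<dots> < e" using \<open>0 < e\<close> by simp
    finally show ?thesis using C \<open>G \<inter> C \<noteq> {}\<close> by blast
  qed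
  moreover have "c ` {C \<in> \<C>. G \<inter> C \<noteq> {}} \<subseteq> X" using c \<open>G \<subseteq> X\<close> by auto
  ultimately show ?thesis
    unfolding separable_on_def using \<open>countable \<C>\<close> by (intro exI[of _ "c ` {C \<in> \<C>. G \<inter> C \<noteq> {}}"]) auto
qed

lemma almost_metric_semimetric_version:
  fixes H :: "nat \<Rightarrow> 'a set"
  assumes "lebesgue_space M" "continuous_measure M" "almost_metric M \<rho>" "\<And>i. H i \<in> sets M"
  obtains \<rho>' G where "semimetric_on (space M) \<rho>'"
    "AE p in M \<Otimes>\<^sub>M M. \<rho>' (fst p) (snd p) = \<rho> (fst p) (snd p)"
    "G \<subseteq> space M" "\<And>x. \<exists>x'\<in>G. \<rho>' x x' = 0"
    "\<And>i e x y. 0 \<le> e \<Longrightarrow> ess_diam M \<rho> (H i) < ereal e \<Longrightarrow>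
       x \<in> G \<Longrightarrow> y \<in> G \<Longrightarrow> x \<in> H i \<Longrightarrow> y \<in> H i \<Longrightarrow> \<rho>' x y \<le> e"
proof -
  obtain E A where "generating_cell_system M E" and A: "A \<in> sets M" "space M - A \<in> null_sets M"
    and sep: "\<And>x y. x \<in> A \<Longrightarrow> y \<in> A \<Longrightarrow> x \<noteq> y \<Longrightarrow> \<exists>i. (x \<in> E i) \<noteq> (y \<in> E i)"
    using lebesgue_space_generating_cell_system[OF assms(1)] by blast
  interpret generating_cell_system M E by fact
  obtain r where "r \<in> borel_measurable PM" "\<And>q. 0 \<le> r q"
    and r_eq: "AE q in PM. r q = \<rho> (fst q) (snd q)"
    and "AE q in PM. r (snd q, fst q) = r q"
    and "AE x in M. AE y in M. AE z in M. r (x, z) \<le> r (x, y) + r (y, z)"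
    by (erule almost_metric_measurable_version[OF assms(3)])
  moreover have "AE q in PM. fst q \<noteq> snd q" by (rule AE_neq_of_separating[OF assms(2) sets_E A sep])
  ultimately interpret regularisation M E r H using assms(4) by unfold_locales
  obtain \<rho>' G where \<rho>': "semimetric_on (space M) \<rho>'" "AE q in PM. \<rho>' (fst q) (snd q) = r q"
    "G \<subseteq> space M" "\<And>x. \<exists>x'\<in>G. \<rho>' x x' = 0"
    and bound: "\<And>i e x y. 0 \<le> e \<Longrightarrow> (AE q in PM. fst q \<in> H i \<longrightarrow> snd q \<in> H i \<longrightarrow> r q \<le> e) \<Longrightarrow>
       x \<in> G \<Longrightarrow> y \<in> G \<Longrightarrow> x \<in> H i \<Longrightarrow> y \<in> H i \<Longrightarrow> \<rho>' x y \<le> e"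
    by (erule obtain_semimetric_AE_eq)
  have "AE p in PM. \<rho>' (fst p) (snd p) = \<rho> (fst p) (snd p)"
    using \<rho>'(2) r_eq by eventually_elim simp
  moreover have "AE q in PM. fst q \<in> H i \<longrightarrow> snd q \<in> H i \<longrightarrow> r q \<le> e"
    if "ess_diam M \<rho> (H i) < ereal e" for i e
    using AE_le_of_ess_diam_less[OF that] r_eq by eventually_elim simp
  ultimately show ?thesis using that \<rho>'(1,3,4) bound by blast
qed

lemma essentially_separable_semimetric_version:
  assumes "lebesgue_space M" "continuous_measure M" "almost_metric M \<rho>" "essentially_separable M \<rho>"
  obtains \<rho>' where "semimetric_on (space M) \<rho>'"
    "AE p in M \<Otimes>\<^sub>M M. \<rho>' (fst p) (snd p) = \<rho> (fst p) (snd p)" "separable_on (space M) \<rho>'"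
proof -
  have "space M \<noteq> {}" using assms(1) prob_space.not_empty by (auto simp: lebesgue_space_def)
  with assms(4) obtain \<C> where \<C>: "countable \<C>" "\<C> \<noteq> {}" "\<C> \<subseteq> sets M"
    and cover: "\<And>e x. 0 < e \<Longrightarrow> x \<in> space M \<Longrightarrow> \<exists>C\<in>\<C>. x \<in> C \<and> ess_diam M \<rho> C < ereal e"
    by (erule essentially_separable_countable_cover)
  define H where "H = from_nat_into \<C>"
  have range_H: "range H = \<C>" using \<C> by (simp add: H_def range_from_nat_into)
  then have sets_H: "H i \<in> sets M" for i using \<C>(3) by auto
  obtain \<rho>' G where \<rho>': "semimetric_on (space M) \<rho>'"
    "AE p in M \<Otimes>\<^sub>M M. \<rho>' (fst p) (snd p) = \<rho> (fst p) (snd p)" "G \<subseteq> space M"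
    and retract: "\<And>x. \<exists>x'\<in>G. \<rho>' x x' = 0"
    and bound: "\<And>i e x y. 0 \<le> e \<Longrightarrow> ess_diam M \<rho> (H i) < ereal e \<Longrightarrow>
       x \<in> G \<Longrightarrow> y \<in> G \<Longrightarrow> x \<in> H i \<Longrightarrow> y \<in> H i \<Longrightarrow> \<rho>' x y \<le> e"
    by (erule almost_metric_semimetric_version[OF assms(1-3) sets_H])
  have "\<exists>C\<in>\<C>. x \<in> C \<and> (\<forall>y\<in>G \<inter> C. \<forall>z\<in>G \<inter> C. \<rho>' y z \<le> e)"
    if "0 < e" and x: "x \<in> G" for e x
  proof -
    obtain C where C: "C \<in> \<C>" "x \<in> C" "ess_diam M \<rho> C < ereal e"
      using cover[of e x] \<open>0 < e\<close> x \<rho>'(3) by blast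
    moreover obtain i where "C = H i" using C(1) range_H by blast
    ultimately show ?thesis using bound[of e i] \<open>0 < e\<close> by auto
  qed
  with \<rho>'(1,3) \<C>(1) retract have "separable_on (space M) \<rho>'"
    by (intro separable_onI_cover[of _ _ G \<C>]) auto
  with \<rho>'(1,2) show ?thesis by (rule that)
qed

theorem mainTheorem2:
  fixes M :: "'a measure" and \<rho> :: "'a \<Rightarrow> 'a \<Rightarrow> real"
  assumes "lebesgue_space M" and "continuous_measure M" and "almost_metric M \<rho>"
  shows "(\<exists>\<rho>'. semimetric_on (space M) \<rho>' \<and>
            (AE p in M \<Otimes>\<^sub>M M. \<rho>' (fst p) (snd p) = \<rho> (fst p) (snd p)))
       \<and> (essentially_separable M \<rho> \<longrightarrow>
           (\<exists>\<rho>'. semimetric_on (space M) \<rho>' \<and>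
              (AE p in M \<Otimes>\<^sub>M M. \<rho>' (fst p) (snd p) = \<rho> (fst p) (snd p)) \<and>
              separable_on (space M) \<rho>' \<and> admissible M \<rho>'))"
proof (intro conjI impI)
  obtain \<rho>' G where "semimetric_on (space M) \<rho>'"
    "AE p in M \<Otimes>\<^sub>M M. \<rho>' (fst p) (snd p) = \<rho> (fst p) (snd p)"
    using almost_metric_semimetric_version[OF assms sets.empty_sets] by metis
  then show "\<exists>\<rho>'. semimetric_on (space M) \<rho>' \<and> (AE p in M \<Otimes>\<^sub>M M. \<rho>' (fst p) (snd p) = \<rho> (fst p) (snd p))"
    by blast
next
  assume "essentially_separable M \<rho>"
  then obtain \<rho>' where "semimetric_on (space M) \<rho>'"
    "AE p in M \<Otimes>\<^sub>M M. \<rho>' (fst p) (snd p) = \<rho> (fst p) (snd p)" "separable_on (space M) \<rho>'"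
    by (rule essentially_separable_semimetric_version[OF assms])
  then show "\<exists>\<rho>'. semimetric_on (space M) \<rho>' \<and>
      (AE p in M \<Otimes>\<^sub>M M. \<rho>' (fst p) (snd p) = \<rho> (fst p) (snd p)) \<and>
      separable_on (space M) \<rho>' \<and> admissible M \<rho>'"
    unfolding admissible_def by (intro exI[of _ \<rho>'] conjI bexI[of _ "space M"]) auto
qed

end
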